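(* Let $a\in\mathbb D$, $b=-a$, and $z=(0,\gamma)$ with $|a|^2<|\gamma|\le|a|^{3/2}$. For $\varepsilon\in\mathbb C\setminus\{0\}$ let $L^\varepsilon_{aVbV}$ be Coman's Lempert function on $\mathbb D^2$ with the four poles $(a,0),(b,0),(b,\varepsilon),(a,\varepsilon)$, all of weight $1$. Then $$\limsup_{\varepsilon\to0}L^\varepsilon_{aVbV}(z)<\min\{L_{a0b0}(z),L_{aVb0}(z),L_{a0bV}(z),L_{aVbV}(z)\}.$$
   Context: $\mathbb D$ is the open unit disc; maps $\varphi=(\varphi_1,\varphi_2)$ are holomorphic $\mathbb D\to\mathbb D^2$, $\zeta_j\in\mathbb D$. Coman's Lempert function with poles $p_1,\dots,p_k$ of weight 1: $\inf\{\sum_j\log|\zeta_j|:\varphi(0)=z,\varphi(\zeta_j)=p_j\}$. All of the following are infima over $\varphi$ with $\varphi(0)=z$, $\varphi(\zeta_1)=(a,0)$, $\varphi(\zeta_2)=(b,0)$: $L_{a0b0}(z)=\inf(\log|\zeta_1|+\log|\zeta_2|)$; $L_{a0bV}(z)=\inf(\log|\zeta_1|+2\log|\zeta_2|)$ with additionally $\varphi_1'(\zeta_2)=0$; $L_{aVb0}(z)=\inf(2\log|\zeta_1|+\log|\zeta_2|)$ with additionally $\varphi_1'(\zeta_1)=0$; $L_{aVbV}(z)=\inf(2\log|\zeta_1|+2\log|\zeta_2|)$ with additionally $\varphi_1'(\zeta_1)=\varphi_1'(\zeta_2)=0$. *)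

theory Defs
  imports "HOL-Analysis.Analysis"
begin

definition logabs :: "complex \<Rightarrow> ereal" where
  "logabs w = (if w = 0 then -\<infinity> else ereal (ln (cmod w)))"

definition disc_map :: "(complex \<Rightarrow> complex) \<Rightarrow> (complex \<Rightarrow> complex) \<Rightarrow> bool" where
  "disc_map f g \<longleftrightarrow> f holomorphic_on ball 0 1 \<and> g holomorphic_on ball 0 1 \<and>
     f ` ball 0 1 \<subseteq> ball 0 1 \<and> g ` ball 0 1 \<subseteq> ball 0 1"

definition coman_lempert :: "(complex \<times> complex) list \<Rightarrow> complex \<times> complex \<Rightarrow> ereal" where
  "coman_lempert ps z = Inf {sum_list (map logabs zs) | f g zs.
      disc_map f g \<and> (f 0, g 0) = z \<and> length zs = length ps \<and>
      (\<forall>j < length ps. zs ! j \<in> ball 0 1 \<and> (f (zs ! j), g (zs ! j)) = ps ! j)}"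

definition L_a0b0 :: "complex \<Rightarrow> complex \<Rightarrow> complex \<times> complex \<Rightarrow> ereal" where
  "L_a0b0 a b z = Inf {logabs z1 + logabs z2 | f g z1 z2.
      disc_map f g \<and> (f 0, g 0) = z \<and> z1 \<in> ball 0 1 \<and> z2 \<in> ball 0 1 \<and>
      (f z1, g z1) = (a, 0) \<and> (f z2, g z2) = (b, 0)}"

definition L_a0bV :: "complex \<Rightarrow> complex \<Rightarrow> complex \<times> complex \<Rightarrow> ereal" where
  "L_a0bV a b z = Inf {logabs z1 + 2 * logabs z2 | f g z1 z2.
      disc_map f g \<and> (f 0, g 0) = z \<and> z1 \<in> ball 0 1 \<and> z2 \<in> ball 0 1 \<and>
      (f z1, g z1) = (a, 0) \<and> (f z2, g z2) = (b, 0) \<and> deriv f z2 = 0}"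

definition L_aVb0 :: "complex \<Rightarrow> complex \<Rightarrow> complex \<times> complex \<Rightarrow> ereal" where
  "L_aVb0 a b z = Inf {2 * logabs z1 + logabs z2 | f g z1 z2.
      disc_map f g \<and> (f 0, g 0) = z \<and> z1 \<in> ball 0 1 \<and> z2 \<in> ball 0 1 \<and>
      (f z1, g z1) = (a, 0) \<and> (f z2, g z2) = (b, 0) \<and> deriv f z1 = 0}"

definition L_aVbV :: "complex \<Rightarrow> complex \<Rightarrow> complex \<times> complex \<Rightarrow> ereal" where
  "L_aVbV a b z = Inf {2 * logabs z1 + 2 * logabs z2 | f g z1 z2.
      disc_map f g \<and> (f 0, g 0) = z \<and> z1 \<in> ball 0 1 \<and> z2 \<in> ball 0 1 \<and>
      (f z1, g z1) = (a, 0) \<and> (f z2, g z2) = (b, 0) \<and> deriv f z1 = 0 \<and> deriv f z2 = 0}"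

end

theory Submission
  imports Defs "HOL-Complex_Analysis.Complex_Analysis"
begin

text \<open>
  Write \<open>\<phi>\<close> for a competitor of any of the four Lempert functions; its first component
  \<open>\<phi>\<^sub>1\<close> is a self-map of the disc with \<open>\<phi>\<^sub>1(0) = 0\<close>, \<open>\<phi>\<^sub>1(\<zeta>\<^sub>1) = a\<close>, \<open>\<phi>\<^sub>1(\<zeta>\<^sub>2) = -a\<close>.
  For \<open>L\<^sub>a\<^sub>0\<^sub>b\<^sub>0\<close> the second component vanishes at both \<open>\<zeta>\<^sub>j\<close>, so Schwarz's lemma gives
  \<open>|\<gamma>| \<le> |\<zeta>\<^sub>1||\<zeta>\<^sub>2|\<close>, and \<open>|\<gamma>| > |a|\<^sup>2\<close>. When \<open>\<phi>\<^sub>1\<close> is critical at a pole, Schwarz-Pick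
  estimates for the quotients of \<open>\<phi>\<^sub>1\<close> (or of \<open>blaschke a \<circ> \<phi>\<^sub>1\<close>) by Blaschke factors show that the
  relevant product of the \<open>|\<zeta>\<^sub>j|\<close> is at least \<open>\<kappa>|a|\<^sup>2\<close> with \<open>\<kappa> > 1\<close> depending only on
  \<open>|a|\<close>. Hence all four functions exceed \<open>log(\<kappa>|a|\<^sup>2)\<close> for some \<open>\<kappa> > 1\<close>.

  Conversely, for \<open>|a| < r < 1\<close> and small \<open>\<epsilon>\<close> there is a competitor for the four-pole
  function with value \<open>2 log(|a|/r)\<close>: the first component \<open>r c blaschke X ((blaschke \<beta> t)\<^sup>2)\<close> takes the values
  \<open>\<plusminus>a\<close> at two pairs of points whose products have modulus \<open>|a|/r\<close>, and the second
  component comes from a three-point Nevanlinna-Pick problem which, as \<open>\<epsilon> \<rightarrow> 0\<close>, tends to a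
  degenerate solvable one; the bound \<open>|\<gamma>| \<le> |a| powr (3/2)\<close> is exactly what makes the limit
  problem solvable. Letting \<open>r \<rightarrow> 1\<close> gives \<open>limsup \<le> 2 log|a| < log(\<kappa>|a|\<^sup>2)\<close>.
\<close>

section \<open>Blaschke factors\<close>

definition blaschke :: "complex \<Rightarrow> complex \<Rightarrow> complex" where
  "blaschke w z = (z - w) / (1 - cnj w * z)"

lemma blaschke_eq_Moebius_function: "blaschke w z = Moebius_function 0 w z"
  by (simp add: blaschke_def Moebius_function_simple)

lemma blaschke_denom_nonzero:
  assumes "norm w < 1" "norm z < 1"
  shows "1 - cnj w * z \<noteq> 0"
proof
  assume "1 - cnj w * z = 0"
  then have "norm (cnj w * z) = 1" by (metis eq_iff_diff_eq_0 norm_one)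
  moreover have "norm w * norm z \<le> norm w * 1"
    using assms by (intro mult_left_mono) auto
  then have "norm (cnj w * z) < 1"
    using assms by (simp add: norm_mult)
  ultimately show False by simp
qed

lemma norm_blaschke_less_1: "norm w < 1 \<Longrightarrow> norm z < 1 \<Longrightarrow> norm (blaschke w z) < 1"
  by (simp add: blaschke_eq_Moebius_function Moebius_function_norm_lt_1)

lemma blaschke_image_ball: "norm w < 1 \<Longrightarrow> blaschke w ` ball 0 1 \<subseteq> ball 0 1"
  using norm_blaschke_less_1 by auto

lemma blaschke_inverse: "norm w < 1 \<Longrightarrow> norm z < 1 \<Longrightarrow> blaschke (-w) (blaschke w z) = z"
  unfolding blaschke_eq_Moebius_function by (rule Moebius_function_compose) auto

lemma blaschke_inverse': "norm w < 1 \<Longrightarrow> norm z < 1 \<Longrightarrow> blaschke w (blaschke (-w) z) = z"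
  using blaschke_inverse[of "-w"] by simp

lemma blaschke_holomorphic: "norm w < 1 \<Longrightarrow> blaschke w holomorphic_on ball 0 1"
  unfolding blaschke_eq_Moebius_function[abs_def] by (rule Moebius_function_holomorphic)

lemma holomorphic_on_blaschke_comp:
  assumes "norm w < 1" "h holomorphic_on S" "\<And>t. t \<in> S \<Longrightarrow> norm (h t) < 1"
  shows "(\<lambda>t. blaschke w (h t)) holomorphic_on S"
  unfolding blaschke_def by (intro holomorphic_intros assms) (use blaschke_denom_nonzero assms in auto)

lemma tendsto_blaschke [tendsto_intros]:
  assumes "(w \<longlongrightarrow> w0) F" "(z \<longlongrightarrow> z0) F" "1 - cnj w0 * z0 \<noteq> 0"
  shows "((\<lambda>x. blaschke (w x) (z x)) \<longlongrightarrow> blaschke w0 z0) F"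
  unfolding blaschke_def by (intro tendsto_intros assms)

lemma blaschke_self [simp]: "blaschke w w = 0"
  by (simp add: blaschke_def)

lemma blaschke_0_right [simp]: "blaschke w 0 = - w"
  by (simp add: blaschke_def)

lemma blaschke_0_left [simp]: "blaschke 0 z = z"
  by (simp add: blaschke_def)

lemma blaschke_eq_0_iff: "norm w < 1 \<Longrightarrow> norm z < 1 \<Longrightarrow> blaschke w z = 0 \<longleftrightarrow> z = w"
  using blaschke_denom_nonzero by (auto simp: blaschke_def)

lemma norm_blaschke_commute: "norm (blaschke w z) = norm (blaschke z w)"
proof -
  have "1 - cnj z * w = cnj (1 - cnj w * z)" by simp
  then have "norm (1 - cnj w * z) = norm (1 - cnj z * w)" by (metis complex_mod_cnj)
  then show ?thesis by (simp add: blaschke_def norm_divide norm_minus_commute)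
qed

lemma one_minus_norm_blaschke_squared:
  assumes "norm w < 1" "norm z < 1"
  shows "1 - (norm (blaschke w z))\<^sup>2 = (1 - (norm w)\<^sup>2) * (1 - (norm z)\<^sup>2) / (norm (1 - cnj w * z))\<^sup>2"
proof -
  have key: "(norm (1 - cnj w * z))\<^sup>2 - (norm (z - w))\<^sup>2 = (1 - (norm w)\<^sup>2) * (1 - (norm z)\<^sup>2)"
    by (simp only: cmod_power2) (simp add: power2_eq_square algebra_simps)
  have "(norm (blaschke w z))\<^sup>2 = (norm (z - w))\<^sup>2 / (norm (1 - cnj w * z))\<^sup>2"
    by (simp add: blaschke_def norm_divide power_divide)
  then show ?thesis using blaschke_denom_nonzero[OF assms] key by (simp add: field_simps)
qed

lemma blaschke_has_field_derivative:
  assumes "norm w < 1" "norm z < 1"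
  shows "(blaschke w has_field_derivative (1 - cnj w * w) / (1 - cnj w * z)\<^sup>2) (at z)"
proof -
  have "((\<lambda>z. (z - w) / (1 - cnj w * z)) has_field_derivative
          (1 - cnj w * w) / (1 - cnj w * z)\<^sup>2) (at z)"
    using blaschke_denom_nonzero[OF assms]
    by (auto intro!: derivative_eq_intros simp: field_simps power2_eq_square)
  then show ?thesis by (simp add: blaschke_def[abs_def])
qed

lemma blaschke_product_opposite:
  assumes "norm \<beta> < 1" "norm w < 1"
  shows "blaschke (-\<beta>) w * blaschke (-\<beta>) (-w) = - blaschke (\<beta>\<^sup>2) (w\<^sup>2)"
proof -
  have "1 + cnj \<beta> * w \<noteq> 0" "1 - cnj \<beta> * w \<noteq> 0"
    using blaschke_denom_nonzero[of "-\<beta>" w] blaschke_denom_nonzero[of \<beta> w] assms by auto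
  then show ?thesis
    by (simp add: blaschke_def field_simps power2_eq_square) (metis minus_diff_eq minus_divide_left)
qed

section \<open>Schwarz-Pick estimates\<close>

lemma holomorphic_bounded_by_1_cases:
  assumes hol: "j holomorphic_on ball 0 1" and le: "\<forall>z\<in>ball 0 1. norm (j z) \<le> 1"
  shows "(\<forall>z\<in>ball 0 1. norm (j z) < 1) \<or> (\<exists>c. norm c = 1 \<and> (\<forall>z\<in>ball 0 1. j z = c))"
proof (cases "\<exists>\<xi>\<in>ball 0 1. norm (j \<xi>) = 1")
  case True
  then obtain \<xi> where \<xi>: "\<xi> \<in> ball 0 1" "norm (j \<xi>) = 1" by blast
  have "j constant_on ball 0 1"
    by (rule maximum_modulus_principle[OF hol open_ball connected_ball open_ball order_refl \<xi>(1)])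
       (use le \<xi> in auto)
  then obtain c where "\<forall>z\<in>ball 0 1. j z = c" by (auto simp: constant_on_def)
  then show ?thesis using \<xi> by force
next
  case False
  then show ?thesis using le by (meson less_le)
qed

lemma holomorphic_bounded_by_1_self_map:
  assumes hol: "j holomorphic_on ball 0 1" and le: "\<forall>z\<in>ball 0 1. norm (j z) \<le> 1"
    and q: "norm q < 1" and "norm (j q) < 1 \<or> deriv j q \<noteq> 0"
  shows "j ` ball 0 1 \<subseteq> ball 0 1"
proof -
  have False if u: "norm u = 1" "\<forall>z\<in>ball 0 1. j z = u" for u
  proof -
    have "(j has_field_derivative 0) (at q)"
      by (rule has_field_derivative_transform_within_open[OF DERIV_const[of u] open_ball[of 0 1]])
         (use u q in auto)
    then show False using DERIV_imp_deriv u q assms(4) by fastforce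
  qed
  then show ?thesis using holomorphic_bounded_by_1_cases[OF hol le] by fastforce
qed

lemma self_map_norm_less_1: "f ` ball 0 1 \<subseteq> ball 0 1 \<Longrightarrow> norm z < 1 \<Longrightarrow> norm (f z) < 1"
  by (auto simp: image_subset_iff)

lemma self_map_blaschke_comp:
  assumes "f holomorphic_on ball 0 1" "f ` ball 0 1 \<subseteq> ball 0 1" "norm c < 1"
  shows "(\<lambda>z. blaschke c (f z)) holomorphic_on ball 0 1"
    and "\<forall>z\<in>ball 0 1. norm (blaschke c (f z)) < 1"
  using assms norm_blaschke_less_1 by (auto intro!: holomorphic_on_blaschke_comp)

lemma holomorphic_factor_zero:
  assumes hol: "h holomorphic_on ball 0 1" and le: "\<forall>z\<in>ball 0 1. norm (h z) \<le> 1"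
    and p: "norm p < 1" and hp: "h p = 0"
  obtains j where "j holomorphic_on ball 0 1" "\<forall>z\<in>ball 0 1. norm (j z) \<le> 1"
    "\<forall>z\<in>ball 0 1. h z = blaschke p z * j z"
proof -
  have mp: "norm (-p) < 1" using p by simp
  define k where "k = h \<circ> blaschke (-p)"
  have holk: "k holomorphic_on ball 0 1"
    unfolding k_def
    by (rule holomorphic_on_compose_gen[OF blaschke_holomorphic[OF mp] hol blaschke_image_ball[OF mp]])
  have k0: "k 0 = 0" using hp by (simp add: k_def)
  have "\<forall>z\<in>ball 0 1. norm (k z) \<le> 1"
    using le norm_blaschke_less_1[OF mp] by (auto simp: k_def)
  then have k_lt: "\<And>z. norm z < 1 \<Longrightarrow> norm (k z) < 1"
    using holomorphic_bounded_by_1_cases[OF holk] k0 by force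
  obtain l where holl: "l holomorphic_on ball 0 1" and kl: "\<And>z. norm z < 1 \<Longrightarrow> k z = z * l z"
      and dl: "deriv k 0 = l 0"
    using Schwarz3[OF holk k0] by blast
  have l_le: "norm (l w) \<le> 1" if "norm w < 1" for w
  proof (cases "w = 0")
    case True
    then show ?thesis using Schwarz_Lemma(2)[OF holk k0 k_lt, of 0] dl by simp
  next
    case False
    have "norm w * norm (l w) \<le> norm w * 1"
      using Schwarz_Lemma(1)[OF holk k0 k_lt that] kl[OF that] by (simp add: norm_mult)
    then show ?thesis using False by simp
  qed
  show ?thesis
  proof
    show "(l \<circ> blaschke p) holomorphic_on ball 0 1"
      by (rule holomorphic_on_compose_gen[OF blaschke_holomorphic[OF p] holl blaschke_image_ball[OF p]])
    show "\<forall>z\<in>ball 0 1. norm ((l \<circ> blaschke p) z) \<le> 1"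
      using l_le norm_blaschke_less_1[OF p] by auto
    show "\<forall>z\<in>ball 0 1. h z = blaschke p z * (l \<circ> blaschke p) z"
    proof
      fix z :: complex assume z: "z \<in> ball 0 1"
      have "h z = k (blaschke p z)" using blaschke_inverse[OF p] z by (simp add: k_def)
      also have "\<dots> = blaschke p z * (l \<circ> blaschke p) z"
        using kl norm_blaschke_less_1[OF p] z by simp
      finally show "h z = blaschke p z * (l \<circ> blaschke p) z" .
    qed
  qed
qed

lemma has_field_derivative_blaschke_times:
  assumes holj: "j holomorphic_on ball 0 1" and p: "norm p < 1" and q: "norm q < 1"
    and eq: "\<forall>z\<in>ball 0 1. h z = blaschke p z * j z"
  shows "(h has_field_derivative
           blaschke p q * deriv j q + (1 - cnj p * p) / (1 - cnj p * q)\<^sup>2 * j q) (at q)"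
proof -
  have "((\<lambda>z. blaschke p z * j z) has_field_derivative
           blaschke p q * deriv j q + (1 - cnj p * p) / (1 - cnj p * q)\<^sup>2 * j q) (at q)"
    using DERIV_mult[OF blaschke_has_field_derivative[OF p q] holomorphic_derivI[OF holj open_ball, of q]] q
    by (simp add: algebra_simps)
  then show ?thesis
    by (rule has_field_derivative_transform_within_open[OF _ open_ball[of 0 1]]) (use q eq in auto)
qed

lemma holomorphic_factor_double_zero:
  assumes hol: "h holomorphic_on ball 0 1" and le: "\<forall>z\<in>ball 0 1. norm (h z) \<le> 1"
    and p: "norm p < 1" and hp: "h p = 0" and dh: "deriv h p = 0"
  obtains j where "j holomorphic_on ball 0 1" "\<forall>z\<in>ball 0 1. norm (j z) \<le> 1"
    "\<forall>z\<in>ball 0 1. h z = (blaschke p z)\<^sup>2 * j z"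
proof -
  obtain j1 where j1: "j1 holomorphic_on ball 0 1" "\<forall>z\<in>ball 0 1. norm (j1 z) \<le> 1"
    "\<forall>z\<in>ball 0 1. h z = blaschke p z * j1 z"
    using holomorphic_factor_zero[OF hol le p hp] by blast
  have "(h has_field_derivative (1 - cnj p * p) / (1 - cnj p * p)\<^sup>2 * j1 p) (at p)"
    using has_field_derivative_blaschke_times[OF j1(1) p p j1(3)] by simp
  then have "(1 - cnj p * p) / (1 - cnj p * p)\<^sup>2 * j1 p = 0"
    using dh by (simp add: DERIV_imp_deriv)
  then have "j1 p = 0"
    using blaschke_denom_nonzero[OF p p] by (simp add: power2_eq_square)
  then obtain j where j: "j holomorphic_on ball 0 1" "\<forall>z\<in>ball 0 1. norm (j z) \<le> 1"
    "\<forall>z\<in>ball 0 1. j1 z = blaschke p z * j z"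
    using holomorphic_factor_zero[OF j1(1) j1(2) p] by blast
  show ?thesis
    by (rule that[OF j(1) j(2)]) (use j1(3) j(3) in \<open>simp add: power2_eq_square\<close>)
qed

lemma norm_at_0_le_product_of_zeros:
  assumes hol: "g holomorphic_on ball 0 1" and le: "\<forall>z\<in>ball 0 1. norm (g z) \<le> 1"
    and p: "norm p < 1" and q: "norm q < 1" and "g p = 0" "g q = 0" "p \<noteq> q"
  shows "norm (g 0) \<le> norm p * norm q"
proof -
  obtain j where j: "j holomorphic_on ball 0 1" "\<forall>z\<in>ball 0 1. norm (j z) \<le> 1"
    "\<forall>z\<in>ball 0 1. g z = blaschke p z * j z"
    using holomorphic_factor_zero[OF hol le p \<open>g p = 0\<close>] by blast
  have "blaschke p q \<noteq> 0" using blaschke_eq_0_iff[OF p q] \<open>p \<noteq> q\<close> by simp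
  then have "j q = 0" using j(3) q \<open>g q = 0\<close> by auto
  then obtain l where l: "l holomorphic_on ball 0 1" "\<forall>z\<in>ball 0 1. norm (l z) \<le> 1"
    "\<forall>z\<in>ball 0 1. j z = blaschke q z * l z"
    using holomorphic_factor_zero[OF j(1) j(2) q] by metis
  have "norm (g 0) = norm p * norm q * norm (l 0)" using j(3) l(3) by (simp add: norm_mult)
  also have "\<dots> \<le> norm p * norm q" using l(2) by (simp add: mult_left_le)
  finally show ?thesis .
qed

lemma schwarz_pick:
  assumes hol: "f holomorphic_on ball 0 1" and img: "f ` ball 0 1 \<subseteq> ball 0 1"
    and z: "norm z < 1" and w: "norm w < 1"
  shows "norm (blaschke (f z) (f w)) \<le> norm (blaschke z w)"
proof -
  have fz: "norm (f z) < 1" using self_map_norm_less_1[OF img z] .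
  note k = self_map_blaschke_comp[OF hol img fz]
  have k_le: "\<forall>x\<in>ball 0 1. norm (blaschke (f z) (f x)) \<le> 1" using k(2) by (simp add: less_imp_le)
  obtain l where "l holomorphic_on ball 0 1" "\<forall>z\<in>ball 0 1. norm (l z) \<le> 1"
    "\<forall>x\<in>ball 0 1. blaschke (f z) (f x) = blaschke z x * l x"
    by (rule holomorphic_factor_zero[OF k(1) k_le z blaschke_self])
  then show ?thesis using w by (simp add: norm_mult mult_left_le)
qed

lemma schwarz_pick_derivative:
  assumes hol: "f holomorphic_on ball 0 1" and img: "f ` ball 0 1 \<subseteq> ball 0 1"
    and q: "norm q < 1"
  shows "norm (deriv f q) * (1 - (norm q)\<^sup>2) \<le> 1 - (norm (f q))\<^sup>2"
proof -
  have fq: "norm (f q) < 1" using self_map_norm_less_1[OF img q] .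
  note k = self_map_blaschke_comp[OF hol img fq]
  have k_le: "\<forall>x\<in>ball 0 1. norm (blaschke (f q) (f x)) \<le> 1" using k(2) by (simp add: less_imp_le)
  obtain l where l: "l holomorphic_on ball 0 1" "\<forall>z\<in>ball 0 1. norm (l z) \<le> 1"
    "\<forall>x\<in>ball 0 1. blaschke (f q) (f x) = blaschke q x * l x"
    by (rule holomorphic_factor_zero[OF k(1) k_le q blaschke_self])
  have D1: "((\<lambda>x. blaschke (f q) (f x)) has_field_derivative
          (1 - cnj q * q) / (1 - cnj q * q)\<^sup>2 * l q) (at q)"
    using has_field_derivative_blaschke_times[OF l(1) q q l(3)] by simp
  have D2: "((\<lambda>x. blaschke (f q) (f x)) has_field_derivative
          (1 - cnj (f q) * f q) / (1 - cnj (f q) * f q)\<^sup>2 * deriv f q) (at q)"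
    by (rule DERIV_chain2[OF blaschke_has_field_derivative[OF fq fq] holomorphic_derivI[OF hol open_ball]])
       (use q in auto)
  have E: "l q / (1 - cnj q * q) = deriv f q / (1 - cnj (f q) * f q)"
    using DERIV_unique[OF D1 D2] blaschke_denom_nonzero[OF q q] blaschke_denom_nonzero[OF fq fq]
    by (simp add: power2_eq_square)
  have cx: "1 - cnj x * x = of_real (1 - (norm x)\<^sup>2)" for x
    using complex_norm_square[of x] by (simp add: mult.commute)
  have pos: "0 < 1 - (norm q)\<^sup>2" "0 < 1 - (norm (f q))\<^sup>2"
    using q fq by (simp_all add: abs_square_less_1)
  then have "norm (l q) / (1 - (norm q)\<^sup>2) = norm (deriv f q) / (1 - (norm (f q))\<^sup>2)"
    using arg_cong[OF E, of norm] unfolding cx norm_divide norm_of_real by simp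
  then have "norm (deriv f q) * (1 - (norm q)\<^sup>2) = norm (l q) * (1 - (norm (f q))\<^sup>2)"
    using pos by (simp add: field_simps)
  also have "\<dots> \<le> 1 - (norm (f q))\<^sup>2"
    using l(2) q pos by (intro mult_left_le_one_le) auto
  finally show ?thesis .
qed

lemma schwarz_pick_critical_point:
  assumes hol: "f holomorphic_on ball 0 1" and img: "f ` ball 0 1 \<subseteq> ball 0 1"
    and p: "norm p < 1" and dfp: "deriv f p = 0" and z: "norm z < 1"
  shows "norm (blaschke (f p) (f z)) \<le> (norm (blaschke p z))\<^sup>2"
proof -
  have fp: "norm (f p) < 1" using self_map_norm_less_1[OF img p] .
  note k = self_map_blaschke_comp[OF hol img fp]
  have "((\<lambda>x. blaschke (f p) (f x)) has_field_derivative 0) (at p)"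
    using DERIV_chain2[OF blaschke_has_field_derivative[OF fp fp] holomorphic_derivI[OF hol open_ball, of p]]
      p dfp by simp
  then have k_deriv: "deriv (\<lambda>x. blaschke (f p) (f x)) p = 0" by (rule DERIV_imp_deriv)
  have k_le: "\<forall>x\<in>ball 0 1. norm (blaschke (f p) (f x)) \<le> 1" using k(2) by (simp add: less_imp_le)
  obtain j where "j holomorphic_on ball 0 1" "\<forall>z\<in>ball 0 1. norm (j z) \<le> 1"
    "\<forall>x\<in>ball 0 1. blaschke (f p) (f x) = (blaschke p x)\<^sup>2 * j x"
    by (rule holomorphic_factor_double_zero[OF k(1) k_le p blaschke_self k_deriv])
  then show ?thesis using z by (simp add: norm_mult norm_power mult_left_le)
qed

lemma norm_one_minus_cnj_mult_le_2:
  assumes "norm p < 1" "norm q < 1"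
  shows "norm (1 - cnj p * q) \<le> 2"
proof -
  have "norm p * norm q \<le> 1" using assms by (simp add: mult_le_one)
  then show ?thesis using norm_triangle_ineq4[of 1 "cnj p * q"] by (simp add: norm_mult)
qed

lemma pseudo_hyperbolic_bound:
  assumes u: "norm u < 1" and v: "norm v < 1" and r: "norm (blaschke u v) \<le> r"
  shows "(1 - r\<^sup>2) * (1 - norm u * norm v)\<^sup>2 \<le> (1 - (norm u)\<^sup>2) * (1 - (norm v)\<^sup>2)"
proof -
  define N where "N = norm (1 - cnj u * v)"
  have N0: "N > 0" using blaschke_denom_nonzero[OF u v] by (simp add: N_def)
  have "1 - norm u * norm v \<le> N"
    using norm_triangle_ineq2[of 1 "cnj u * v"] by (simp add: N_def norm_mult)
  moreover have "norm u * norm v \<le> 1" using u v by (simp add: mult_le_one)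
  ultimately have uv: "(1 - norm u * norm v)\<^sup>2 \<le> N\<^sup>2" by (intro power_mono) auto
  have "(norm (blaschke u v))\<^sup>2 \<le> r\<^sup>2" using r by (simp add: power_mono)
  then have "1 - r\<^sup>2 \<le> (1 - (norm u)\<^sup>2) * (1 - (norm v)\<^sup>2) / N\<^sup>2"
    using one_minus_norm_blaschke_squared[OF u v] by (simp add: N_def)
  then have A: "(1 - r\<^sup>2) * N\<^sup>2 \<le> (1 - (norm u)\<^sup>2) * (1 - (norm v)\<^sup>2)"
    using N0 by (simp add: field_simps)
  show ?thesis
  proof (cases "1 - r\<^sup>2 \<ge> 0")
    case True
    then show ?thesis using A uv by (smt (verit) mult_left_mono)
  next
    case False
    have "0 \<le> (1 - (norm u)\<^sup>2) * (1 - (norm v)\<^sup>2)" using u v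
      by (intro mult_nonneg_nonneg) (auto simp: abs_square_le_1 less_imp_le)
    moreover have "(1 - r\<^sup>2) * (1 - norm u * norm v)\<^sup>2 \<le> 0" using False
      by (intro mult_nonpos_nonneg) auto
    ultimately show ?thesis by linarith
  qed
qed

lemma one_minus_norm_blaschke_squared_ge:
  assumes p: "norm p < 1" and q: "norm q < 1"
  shows "(1 - (norm p)\<^sup>2) * (1 - (norm q)\<^sup>2) / 4 \<le> 1 - (norm (blaschke p q))\<^sup>2"
proof -
  define N where "N = norm (1 - cnj p * q)"
  have N0: "N > 0" using blaschke_denom_nonzero[OF p q] by (simp add: N_def)
  have "N\<^sup>2 \<le> 2\<^sup>2" using N0 norm_one_minus_cnj_mult_le_2[OF p q] by (intro power_mono) (auto simp: N_def)
  moreover have "0 \<le> (1 - (norm p)\<^sup>2) * (1 - (norm q)\<^sup>2)" using p q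
    by (intro mult_nonneg_nonneg) (auto simp: abs_square_le_1 less_imp_le)
  ultimately have "(1 - (norm p)\<^sup>2) * (1 - (norm q)\<^sup>2) / 4 \<le> (1 - (norm p)\<^sup>2) * (1 - (norm q)\<^sup>2) / N\<^sup>2"
    using N0 by (intro divide_left_mono) auto
  then show ?thesis using one_minus_norm_blaschke_squared[OF p q] by (simp add: N_def)
qed

lemma norm_critical_value_le:
  assumes "f holomorphic_on ball 0 1" "f ` ball 0 1 \<subseteq> ball 0 1" "f 0 = 0"
    and "norm p < 1" "deriv f p = 0"
  shows "norm (f p) \<le> (norm p)\<^sup>2"
  using schwarz_pick_critical_point[OF assms(1,2,4,5), of 0] assms(3) by simp

lemma norm_blaschke_derivative_ge:
  assumes p: "norm p < 1" and q: "norm q < 1"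
  shows "(1 - (norm p)\<^sup>2) / 4 \<le> norm ((1 - cnj p * p) / (1 - cnj p * q)\<^sup>2)"
proof -
  have N0: "norm (1 - cnj p * q) > 0" using blaschke_denom_nonzero[OF p q] by simp
  have "(norm (1 - cnj p * q))\<^sup>2 \<le> 2\<^sup>2"
    using norm_one_minus_cnj_mult_le_2[OF p q] by (intro power_mono) auto
  moreover have "1 - cnj p * p = of_real (1 - (norm p)\<^sup>2)"
    using complex_norm_square[of p] by (simp add: mult.commute)
  then have "norm ((1 - cnj p * p) / (1 - cnj p * q)\<^sup>2) = (1 - (norm p)\<^sup>2) / (norm (1 - cnj p * q))\<^sup>2"
    using p by (simp only: norm_divide norm_power norm_of_real) (simp add: abs_square_less_1 less_imp_le)
  ultimately show ?thesis
    using p N0 by (simp only:) (intro divide_left_mono, auto simp: abs_square_less_1 less_imp_le)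
qed

lemma norm_deriv_at_critical_point_ge:
  assumes holj: "j holomorphic_on ball 0 1" and p: "norm p < 1" and q: "norm q < 1" and "p \<noteq> q"
    and eq: "\<forall>z\<in>ball 0 1. h z = (blaschke p z)\<^sup>2 * j z" and dh: "(h has_field_derivative 0) (at q)"
  shows "(1 - (norm p)\<^sup>2) * norm (j q) / 2 \<le> norm (deriv j q)"
proof -
  define d where "d = (1 - cnj p * p) / (1 - cnj p * q)\<^sup>2"
  have "((\<lambda>z. (blaschke p z)\<^sup>2 * j z) has_field_derivative
          2 * blaschke p q * d * j q + (blaschke p q)\<^sup>2 * deriv j q) (at q)"
    using blaschke_has_field_derivative[OF p q] holomorphic_derivI[OF holj open_ball, of q] q
    by (auto intro!: derivative_eq_intros simp: d_def)
  then have "(h has_field_derivative 2 * blaschke p q * d * j q + (blaschke p q)\<^sup>2 * deriv j q) (at q)"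
    by (rule has_field_derivative_transform_within_open[OF _ open_ball[of 0 1]]) (use q eq in auto)
  then have "blaschke p q * (2 * d * j q + blaschke p q * deriv j q) = 0"
    using DERIV_unique[OF _ dh] by (simp add: algebra_simps power2_eq_square)
  moreover have "blaschke p q \<noteq> 0" using blaschke_eq_0_iff[OF p q] \<open>p \<noteq> q\<close> by simp
  ultimately have "2 * d * j q + blaschke p q * deriv j q = 0" by simp
  then have "norm (blaschke p q * deriv j q) = norm (- (2 * d * j q))" by (metis add_eq_0_iff2 add.commute)
  then have E: "norm (blaschke p q) * norm (deriv j q) = 2 * norm d * norm (j q)"
    by (simp only: norm_mult norm_minus_cancel norm_numeral)
  have "(1 - (norm p)\<^sup>2) * norm (j q) / 2 = (1 - (norm p)\<^sup>2) / 4 * norm (j q) * 2" by simp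
  also have "\<dots> \<le> norm d * norm (j q) * 2"
    using norm_blaschke_derivative_ge[OF p q, folded d_def] by (intro mult_right_mono) auto
  also have "\<dots> = norm (blaschke p q) * norm (deriv j q)" using E by simp
  also have "\<dots> \<le> norm (deriv j q)"
    using norm_blaschke_less_1[OF p q] by (simp add: mult_left_le_one_le)
  finally show ?thesis .
qed

section \<open>Estimates at critical points\<close>

lemma critical_and_opposite_value_arith:
  fixes P Q a b C :: real
  assumes P: "0 \<le> P" "P < 1" and Q: "0 \<le> Q" "Q < 1" and a: "0 \<le> a" "a < 1" "a \<le> sqrt C"
    and b: "0 \<le> b" "b < 1"
    and d: "(1 - P) * (1 - Q\<^sup>2) / 4 * (1 - a * b)\<^sup>2 \<le> (1 - a\<^sup>2) * (1 - b\<^sup>2)"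
  shows "(1 - P) * (1 - Q\<^sup>2) * (1 - sqrt C) \<le> 8 * (1 - b\<^sup>2)"
proof -
  define K where "K = (1 - P) * (1 - Q\<^sup>2) / 4"
  have K: "0 \<le> K" using P Q by (auto simp: K_def abs_square_le_1)
  have "1 - a * b \<ge> 1 - a" using a b by (smt (verit) mult_right_le_one_le)
  then have "(1 - a * b)\<^sup>2 \<ge> (1 - a)\<^sup>2" using a by (simp add: power_mono)
  then have "K * (1 - a)\<^sup>2 \<le> (1 - a\<^sup>2) * (1 - b\<^sup>2)" using d K unfolding K_def[symmetric]
    by (smt (verit) mult_left_mono)
  also have "\<dots> = (1 - a) * ((1 + a) * (1 - b\<^sup>2))" by (simp add: power2_eq_square algebra_simps)
  finally have "(1 - a) * (K * (1 - a)) \<le> (1 - a) * ((1 + a) * (1 - b\<^sup>2))"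
    by (simp add: power2_eq_square algebra_simps)
  then have "K * (1 - a) \<le> (1 + a) * (1 - b\<^sup>2)" using a by simp
  also have "\<dots> \<le> 2 * (1 - b\<^sup>2)"
    using a b by (intro mult_right_mono) (auto simp: abs_square_le_1)
  finally have "K * (1 - a) \<le> 2 * (1 - b\<^sup>2)" .
  moreover have "K * (1 - sqrt C) \<le> K * (1 - a)" using a K by (intro mult_left_mono) auto
  ultimately show ?thesis by (simp add: K_def)
qed

lemma critical_and_opposite_value_estimate:
  assumes hol: "f holomorphic_on ball 0 1" and img: "f ` ball 0 1 \<subseteq> ball 0 1" and f0: "f 0 = 0"
    and c0: "c \<noteq> 0" and p: "norm p < 1" and q: "norm q < 1"
    and fp: "f p = c" and dfp: "deriv f p = 0" and fq: "f q = - c"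
  shows "(1 - (norm p)\<^sup>2) * (1 - (norm q)\<^sup>2) * (1 - sqrt (norm c)) \<le> 8 * (1 - (norm c / norm q)\<^sup>2)"
proof -
  have "\<forall>z\<in>ball 0 1. norm (f z) \<le> 1" using img by (auto simp: image_subset_iff less_imp_le)
  then obtain \<psi> where \<psi>: "\<psi> holomorphic_on ball 0 1" "\<forall>z\<in>ball 0 1. norm (\<psi> z) \<le> 1"
    "\<forall>z\<in>ball 0 1. f z = z * \<psi> z"
    using holomorphic_factor_zero[OF hol _ _ f0] by (metis blaschke_0_left norm_zero zero_less_one)
  have p0: "p \<noteq> 0" and q0: "q \<noteq> 0" using fp fq f0 c0 by auto
  have c_le: "norm c \<le> (norm p)\<^sup>2" using norm_critical_value_le[OF hol img f0 p dfp] fp by simp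
  have \<psi>p: "\<psi> p = c / p" and \<psi>q: "\<psi> q = - c / q"
    using \<psi>(3) p q fp fq p0 q0 by (auto simp: field_simps)
  have "norm p * norm p < norm p * 1" using p p0 by (intro mult_strict_left_mono) auto
  then have "norm c < norm p" using c_le[unfolded power2_eq_square] by linarith
  then have "norm (\<psi> p) < 1" using p0 by (simp add: \<psi>p norm_divide divide_less_eq)
  then have img\<psi>: "\<psi> ` ball 0 1 \<subseteq> ball 0 1" using holomorphic_bounded_by_1_self_map[OF \<psi>(1,2) p] by blast
  define a where "a = norm (\<psi> p)"
  define b where "b = norm (\<psi> q)"
  have a1: "a < 1" and b1: "b < 1"
    using self_map_norm_less_1[OF img\<psi>] p q by (auto simp: a_def b_def)
  have "sqrt (norm c) \<le> norm p" using real_sqrt_le_mono[OF c_le] by simp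
  then have "sqrt (norm c) * sqrt (norm c) \<le> sqrt (norm c) * norm p"
    by (intro mult_left_mono) auto
  then have a_le: "a \<le> sqrt (norm c)"
    using p0 by (simp add: a_def \<psi>p norm_divide pos_divide_le_eq)
  have "norm (blaschke (\<psi> p) (\<psi> q)) \<le> norm (blaschke p q)" by (rule schwarz_pick[OF \<psi>(1) img\<psi> p q])
  then have "(1 - (norm (blaschke p q))\<^sup>2) * (1 - a * b)\<^sup>2 \<le> (1 - a\<^sup>2) * (1 - b\<^sup>2)"
    using pseudo_hyperbolic_bound a1 b1 by (simp add: a_def b_def)
  moreover have "(1 - (norm p)\<^sup>2) * (1 - (norm q)\<^sup>2) / 4 * (1 - a * b)\<^sup>2
      \<le> (1 - (norm (blaschke p q))\<^sup>2) * (1 - a * b)\<^sup>2"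
    using one_minus_norm_blaschke_squared_ge[OF p q] by (intro mult_right_mono) auto
  ultimately have "(1 - (norm p)\<^sup>2) * (1 - (norm q)\<^sup>2) * (1 - sqrt (norm c)) \<le> 8 * (1 - b\<^sup>2)"
    using critical_and_opposite_value_arith[OF _ _ _ _ _ a1 a_le _ b1] p q
    by (auto simp: a_def b_def abs_square_less_1)
  then show ?thesis by (simp add: b_def \<psi>q norm_divide)
qed

lemma two_critical_points_arith:
  fixes P Q J0 Jq D :: real
  assumes P: "0 \<le> P" "P < 1" and Q: "0 \<le> Q" "Q < 1" and J0: "0 \<le> J0" "J0 \<le> 1"
    and Jq: "0 \<le> Jq" "Jq < 1" and D: "0 \<le> D"
    and b: "(1 - P) * Jq / 2 \<le> D" and c: "D * (1 - Q\<^sup>2) \<le> 1 - Jq\<^sup>2"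
    and d: "(1 - Q\<^sup>2) * (1 - J0 * Jq)\<^sup>2 \<le> (1 - J0\<^sup>2) * (1 - Jq\<^sup>2)"
  shows "(1 - P) * (1 - Q\<^sup>2)\<^sup>2 \<le> 20 * (1 - J0)"
proof -
  define x where "x = 1 - Jq"
  define y where "y = 1 - Q\<^sup>2"
  define z where "z = 1 - P"
  define E where "E = 1 - J0\<^sup>2"
  have x: "0 < x" "x \<le> 1" using Jq by (auto simp: x_def)
  have y: "0 < y" "y \<le> 1" using Q by (auto simp: y_def abs_square_less_1)
  have z: "0 < z" "z \<le> 1" using P by (auto simp: z_def)
  have E: "0 \<le> E" "E \<le> 2 * (1 - J0)"
  proof -
    show "0 \<le> E" using J0 by (simp add: E_def abs_square_le_1)
    have "0 \<le> (1 - J0)\<^sup>2" by simp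
    then show "E \<le> 2 * (1 - J0)" by (simp add: E_def power2_eq_square algebra_simps)
  qed
  have e1: "1 - Jq\<^sup>2 = x * (1 + Jq)" by (simp add: x_def power2_eq_square algebra_simps)
  have "x \<le> 1 - J0 * Jq" using J0 Jq by (simp add: x_def mult_left_le_one_le)
  then have "y * x\<^sup>2 \<le> y * (1 - J0 * Jq)\<^sup>2" using x y by (intro mult_left_mono power_mono) auto
  also have "\<dots> \<le> E * (x * (1 + Jq))" using d e1 by (simp add: y_def E_def)
  finally have "x * (y * x) \<le> x * (E * (1 + Jq))" by (simp add: power2_eq_square algebra_simps)
  then have "y * x \<le> E * (1 + Jq)" using x by simp
  also have "\<dots> \<le> E * 2" using E Jq by (intro mult_left_mono) auto
  finally have yx: "y * x \<le> 2 * E" by simp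
  have "z * Jq / 2 * y \<le> D * y" using b y by (simp add: z_def mult_right_mono)
  also have "\<dots> \<le> x * (1 + Jq)" using c e1 by (simp add: y_def)
  also have "\<dots> \<le> 2 * x" using x Jq by simp
  finally have zy: "z * (1 - x) * y \<le> 4 * x" by (simp add: x_def)
  have "z * y\<^sup>2 = z * (1 - x) * y * y + z * y * (x * y)" by (simp add: power2_eq_square algebra_simps)
  also have "\<dots> \<le> 4 * x * y + 1 * (x * y)"
  proof (rule add_mono)
    show "z * (1 - x) * y * y \<le> 4 * x * y" using zy y by (simp add: mult_right_mono)
    have "z * y \<le> 1" using y z by (simp add: mult_le_one)
    then show "z * y * (x * y) \<le> 1 * (x * y)" using x y by (intro mult_right_mono) auto
  qed
  also have "\<dots> \<le> 20 * (1 - J0)" using yx E by (simp add: algebra_simps)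
  finally show ?thesis by (simp add: z_def y_def)
qed

lemma two_critical_points_estimate:
  assumes hol: "f holomorphic_on ball 0 1" and img: "f ` ball 0 1 \<subseteq> ball 0 1" and f0: "f 0 = 0"
    and c0: "c \<noteq> 0" and p: "norm p < 1" and q: "norm q < 1"
    and fp: "f p = c" and dfp: "deriv f p = 0" and fq: "f q = - c" and dfq: "deriv f q = 0"
  shows "(1 - (norm p)\<^sup>2) * (1 - (norm q)\<^sup>2)\<^sup>2 \<le> 20 * (1 - norm c / (norm p)\<^sup>2)"
proof -
  have c1: "norm c < 1" using self_map_norm_less_1[OF img p] fp by simp
  define h where "h = (\<lambda>z. blaschke c (f z))"
  note H = self_map_blaschke_comp[OF hol img c1, folded h_def]
  have h_le: "\<forall>z\<in>ball 0 1. norm (h z) \<le> 1" using H(2) by (simp add: h_def less_imp_le)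
  have dh: "(h has_field_derivative 0) (at x)" if "norm x < 1" "deriv f x = 0" for x
    using DERIV_chain2[OF blaschke_has_field_derivative[OF c1] holomorphic_derivI[OF hol open_ball, of x]]
      self_map_norm_less_1[OF img] that by (simp add: h_def)
  have hp: "h p = 0" using fp by (simp add: h_def)
  obtain j where j: "j holomorphic_on ball 0 1" "\<forall>z\<in>ball 0 1. norm (j z) \<le> 1"
      "\<forall>z\<in>ball 0 1. h z = (blaschke p z)\<^sup>2 * j z"
    by (rule holomorphic_factor_double_zero[OF H(1) h_le p hp DERIV_imp_deriv[OF dh[OF p dfp]]])
  have p0: "p \<noteq> 0" and pq: "p \<noteq> q" using fp fq f0 c0 by auto
  have "-c = p\<^sup>2 * j 0" using j(3)[rule_format, of 0] f0 by (simp add: h_def)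
  then have "norm c = (norm p)\<^sup>2 * norm (j 0)" by (metis norm_minus_cancel norm_mult norm_power)
  then have J0: "norm (j 0) = norm c / (norm p)\<^sup>2" using p0 by simp
  have b: "(1 - (norm p)\<^sup>2) * norm (j q) / 2 \<le> norm (deriv j q)"
    by (rule norm_deriv_at_critical_point_ge[OF j(1) p q pq j(3) dh[OF q dfq]])
  have "0 < 1 - (norm p)\<^sup>2" using p by (simp add: abs_square_less_1)
  then have "norm (j q) < 1 \<or> deriv j q \<noteq> 0"
    using b by (cases "deriv j q = 0") (auto simp: mult_le_0_iff)
  then have imgj: "j ` ball 0 1 \<subseteq> ball 0 1" by (rule holomorphic_bounded_by_1_self_map[OF j(1,2) q])
  note j_lt = self_map_norm_less_1[OF imgj]
  have c: "norm (deriv j q) * (1 - (norm q)\<^sup>2) \<le> 1 - (norm (j q))\<^sup>2"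
    by (rule schwarz_pick_derivative[OF j(1) imgj q])
  have "norm (blaschke (j 0) (j q)) \<le> norm q" using schwarz_pick[OF j(1) imgj _ q, of 0] by simp
  then have d: "(1 - (norm q)\<^sup>2) * (1 - norm (j 0) * norm (j q))\<^sup>2 \<le> (1 - (norm (j 0))\<^sup>2) * (1 - (norm (j q))\<^sup>2)"
    using pseudo_hyperbolic_bound j_lt q by simp
  have "(1 - (norm p)\<^sup>2) * (1 - (norm q)\<^sup>2)\<^sup>2 \<le> 20 * (1 - norm (j 0))"
    by (rule two_critical_points_arith[OF _ _ _ _ _ _ _ j_lt[OF q] _ b c d])
       (use p q j_lt[of 0] in \<open>auto simp: abs_square_less_1 less_imp_le\<close>)
  then show ?thesis using J0 by simp
qed

section \<open>Lower bounds for the Lempert functions\<close>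

lemma product_ge_by_threshold:
  fixes C T d P Q :: real
  assumes C: "0 < C" "C < T" and d: "d < 1" and P: "C \<le> P" and Q: "C \<le> Q"
    and below: "P \<le> T \<Longrightarrow> Q \<le> T \<Longrightarrow> C \<le> (1 - d) * Q"
  shows "C\<^sup>2 * min (T / C) (1 / (1 - d)) \<le> P * Q"
proof (cases "P \<le> T \<and> Q \<le> T")
  case True
  have "C\<^sup>2 * min (T / C) (1 / (1 - d)) \<le> C\<^sup>2 * (1 / (1 - d))" by (intro mult_left_mono) auto
  also have "\<dots> = C * (C / (1 - d))" by (simp add: power2_eq_square)
  also have "\<dots> \<le> P * Q"
    using below True d C P by (intro mult_mono) (auto simp: pos_divide_le_eq mult.commute[of "1 - d"])
  finally show ?thesis .
next
  case False
  have "C\<^sup>2 * min (T / C) (1 / (1 - d)) \<le> C\<^sup>2 * (T / C)" by (intro mult_left_mono) auto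
  also have "\<dots> = C * T" using C by (simp add: power2_eq_square)
  also have "\<dots> \<le> P * Q"
  proof (cases "P \<le> T")
    case True
    then have "T \<le> Q" using False by simp
    then show ?thesis using C P by (intro mult_mono) auto
  next
    case False
    then have "C * T \<le> Q * P" using C Q by (intro mult_mono) auto
    then show ?thesis by (simp add: mult.commute)
  qed
  finally show ?thesis .
qed

lemma critical_and_opposite_value_gap:
  fixes C :: real
  assumes C: "0 < C" "C < 1"
  obtains \<kappa> where "1 < \<kappa>"
    "\<And>P Q. C \<le> P \<Longrightarrow> P < 1 \<Longrightarrow> C \<le> Q \<Longrightarrow> Q < 1 \<Longrightarrow>
       (1 - P) * (1 - Q\<^sup>2) * (1 - sqrt C) \<le> 8 * (1 - (C / Q)\<^sup>2) \<Longrightarrow> C\<^sup>2 * \<kappa> \<le> P * Q"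
proof -
  define T where "T = (1 + C) / 2"
  define X where "X = (1 - T) * (1 - T\<^sup>2) * (1 - sqrt C)"
  define d where "d = X / 16"
  have T: "C < T" "T < 1" using C by (auto simp: T_def)
  have T2: "T\<^sup>2 < 1" using T C by (simp add: abs_square_less_1)
  have sC: "sqrt C < 1" using C by simp
  have d0: "0 < d" using T T2 sC by (simp add: d_def X_def)
  have "X \<le> 1 * 1 * 1"
    unfolding X_def using T T2 sC C by (intro mult_mono) (auto simp: mult_le_one)
  then have d1: "d < 1" by (simp add: d_def)
  have "1 < min (T / C) (1 / (1 - d))" using T C d0 d1 by simp
  moreover have "C\<^sup>2 * min (T / C) (1 / (1 - d)) \<le> P * Q"
    if P: "C \<le> P" "P < 1" and Q: "C \<le> Q" "Q < 1"
      and est: "(1 - P) * (1 - Q\<^sup>2) * (1 - sqrt C) \<le> 8 * (1 - (C / Q)\<^sup>2)" for P Q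
  proof (rule product_ge_by_threshold[OF C(1) T(1) d1 P(1) Q(1)])
    assume "P \<le> T" "Q \<le> T"
    have Q0: "0 < Q" using C Q by linarith
    have "Q\<^sup>2 \<le> T\<^sup>2" using \<open>Q \<le> T\<close> Q0 by (intro power_mono) auto
    then have "(1 - T) * (1 - T\<^sup>2) \<le> (1 - P) * (1 - Q\<^sup>2)"
      using \<open>P \<le> T\<close> T T2 by (intro mult_mono) auto
    then have "X \<le> (1 - P) * (1 - Q\<^sup>2) * (1 - sqrt C)"
      unfolding X_def using sC by (intro mult_right_mono) auto
    then have X_le: "X \<le> 8 * (1 - (C / Q)\<^sup>2)" using est by (rule order_trans)
    define x where "x = C / Q"
    have "2 * d \<le> 1 - x * x" using X_le[folded x_def] by (simp add: d_def power2_eq_square)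
    have "0 \<le> x" "x \<le> 1" using C Q Q0 by (auto simp: x_def)
    then have "(1 - x) * (1 + x) \<le> (1 - x) * 2" by (intro mult_left_mono) auto
    then have "x \<le> 1 - d" using \<open>2 * d \<le> 1 - x * x\<close> by (simp add: algebra_simps)
    then have "C / Q \<le> 1 - d" by (simp add: x_def)
    then show "C \<le> (1 - d) * Q" using Q0 by (simp add: divide_le_eq mult.commute[of Q])
  qed
  ultimately show thesis by (rule that)
qed

lemma two_critical_points_gap:
  fixes C :: real
  assumes C: "0 < C" "C < 1"
  obtains \<kappa> where "1 < \<kappa>"
    "\<And>P Q. C \<le> P \<Longrightarrow> P < 1 \<Longrightarrow> C \<le> Q \<Longrightarrow> Q < 1 \<Longrightarrow>
       (1 - P) * (1 - Q)\<^sup>2 \<le> 20 * (1 - C / P) \<Longrightarrow> C\<^sup>2 * \<kappa> \<le> P * Q"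
proof -
  define T where "T = (1 + C) / 2"
  define d where "d = (1 - T) ^ 3 / 20"
  have T: "C < T" "T < 1" using C by (auto simp: T_def)
  have d0: "0 < d" using T by (simp add: d_def)
  have "(1 - T) ^ 3 \<le> 1 ^ 3" using T C by (intro power_mono) auto
  then have d1: "d < 1" by (simp add: d_def)
  have "1 < min (T / C) (1 / (1 - d))" using T C d0 d1 by simp
  moreover have "C\<^sup>2 * min (T / C) (1 / (1 - d)) \<le> P * Q"
    if P: "C \<le> P" "P < 1" and Q: "C \<le> Q" "Q < 1"
      and est: "(1 - P) * (1 - Q)\<^sup>2 \<le> 20 * (1 - C / P)" for P Q
  proof -
    have "C\<^sup>2 * min (T / C) (1 / (1 - d)) \<le> Q * P"
    proof (rule product_ge_by_threshold[OF C(1) T(1) d1 Q(1) P(1)])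
      assume "Q \<le> T" "P \<le> T"
      have P0: "0 < P" using C P by linarith
      have "20 * d = (1 - T) * (1 - T)\<^sup>2" by (simp add: d_def power3_eq_cube power2_eq_square)
      also have "\<dots> \<le> (1 - P) * (1 - Q)\<^sup>2"
        using \<open>P \<le> T\<close> \<open>Q \<le> T\<close> T by (intro mult_mono power_mono) auto
      also have "\<dots> \<le> 20 * (1 - C / P)" by (rule est)
      finally have "d \<le> 1 - C / P" by (metis mult_le_cancel_left_pos zero_less_numeral)
      then have "C / P \<le> 1 - d" by linarith
      then show "C \<le> (1 - d) * P" using P0 by (simp add: divide_le_eq mult.commute[of P])
    qed
    then show ?thesis by (simp add: mult.commute)
  qed
  ultimately show thesis by (rule that)
qed

lemma norm_self_map_le:
  assumes "f holomorphic_on ball 0 1" "f ` ball 0 1 \<subseteq> ball 0 1" "f 0 = 0" "norm z < 1"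
  shows "norm (f z) \<le> norm z"
  using Schwarz_Lemma(1)[OF assms(1,3) self_map_norm_less_1[OF assms(2)] assms(4)] .

lemma critical_and_opposite_value_product_bound:
  assumes c: "c \<noteq> 0" "norm c < 1"
  obtains \<kappa> where "1 < \<kappa>"
    "\<And>f p q. f holomorphic_on ball 0 1 \<Longrightarrow> f ` ball 0 1 \<subseteq> ball 0 1 \<Longrightarrow> f 0 = 0 \<Longrightarrow>
       norm p < 1 \<Longrightarrow> norm q < 1 \<Longrightarrow> f p = c \<Longrightarrow> deriv f p = 0 \<Longrightarrow> f q = - c \<Longrightarrow>
       (norm c)\<^sup>2 * \<kappa> \<le> (norm p)\<^sup>2 * norm q"
proof -
  obtain \<kappa> where \<kappa>: "1 < \<kappa>" and gap: "\<And>P Q. norm c \<le> P \<Longrightarrow> P < 1 \<Longrightarrow> norm c \<le> Q \<Longrightarrow> Q < 1 \<Longrightarrow>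
       (1 - P) * (1 - Q\<^sup>2) * (1 - sqrt (norm c)) \<le> 8 * (1 - (norm c / Q)\<^sup>2) \<Longrightarrow>
       (norm c)\<^sup>2 * \<kappa> \<le> P * Q"
    by (rule critical_and_opposite_value_gap[of "norm c"]) (use c in auto)
  show thesis
  proof (rule that[OF \<kappa>])
    fix f p q
    assume f: "f holomorphic_on ball 0 1" "f ` ball 0 1 \<subseteq> ball 0 1" "f 0 = 0"
      and pq: "norm p < 1" "norm q < 1" and fp: "f p = c" "deriv f p = 0" and fq: "f q = - c"
    show "(norm c)\<^sup>2 * \<kappa> \<le> (norm p)\<^sup>2 * norm q"
    proof (rule gap)
      show "norm c \<le> (norm p)\<^sup>2" using norm_critical_value_le[OF f pq(1) fp(2)] fp by simp
      show "norm c \<le> norm q" using norm_self_map_le[OF f pq(2)] fq by simp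
      show "(1 - (norm p)\<^sup>2) * (1 - (norm q)\<^sup>2) * (1 - sqrt (norm c)) \<le> 8 * (1 - (norm c / norm q)\<^sup>2)"
        by (rule critical_and_opposite_value_estimate[OF f c(1) pq fp fq])
    qed (use pq in \<open>auto simp: abs_square_less_1\<close>)
  qed
qed

lemma two_critical_points_product_bound:
  assumes c: "c \<noteq> 0" "norm c < 1"
  obtains \<kappa> where "1 < \<kappa>"
    "\<And>f p q. f holomorphic_on ball 0 1 \<Longrightarrow> f ` ball 0 1 \<subseteq> ball 0 1 \<Longrightarrow> f 0 = 0 \<Longrightarrow>
       norm p < 1 \<Longrightarrow> norm q < 1 \<Longrightarrow> f p = c \<Longrightarrow> deriv f p = 0 \<Longrightarrow> f q = - c \<Longrightarrow> deriv f q = 0 \<Longrightarrow>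
       (norm c)\<^sup>2 * \<kappa> \<le> (norm p)\<^sup>2 * (norm q)\<^sup>2"
proof -
  obtain \<kappa> where \<kappa>: "1 < \<kappa>" and gap: "\<And>P Q. norm c \<le> P \<Longrightarrow> P < 1 \<Longrightarrow> norm c \<le> Q \<Longrightarrow> Q < 1 \<Longrightarrow>
       (1 - P) * (1 - Q)\<^sup>2 \<le> 20 * (1 - norm c / P) \<Longrightarrow> (norm c)\<^sup>2 * \<kappa> \<le> P * Q"
    by (rule two_critical_points_gap[of "norm c"]) (use c in auto)
  show thesis
  proof (rule that[OF \<kappa>])
    fix f p q
    assume f: "f holomorphic_on ball 0 1" "f ` ball 0 1 \<subseteq> ball 0 1" "f 0 = 0"
      and pq: "norm p < 1" "norm q < 1" and fp: "f p = c" "deriv f p = 0"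
      and fq: "f q = - c" "deriv f q = 0"
    show "(norm c)\<^sup>2 * \<kappa> \<le> (norm p)\<^sup>2 * (norm q)\<^sup>2"
    proof (rule gap)
      show "norm c \<le> (norm p)\<^sup>2" using norm_critical_value_le[OF f pq(1) fp(2)] fp by simp
      show "norm c \<le> (norm q)\<^sup>2" using norm_critical_value_le[OF f pq(2) fq(2)] fq by simp
      show "(1 - (norm p)\<^sup>2) * (1 - (norm q)\<^sup>2)\<^sup>2 \<le> 20 * (1 - norm c / (norm p)\<^sup>2)"
        by (rule two_critical_points_estimate[OF f c(1) pq fp fq])
    qed (use pq in \<open>auto simp: abs_square_less_1\<close>)
  qed
qed

lemma ln_le_logabs_combination:
  assumes "0 < x" "x \<le> norm z1 ^ m * norm z2 ^ n" "z1 \<noteq> 0" "z2 \<noteq> 0"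
  shows "ereal (ln x) \<le> ereal m * logabs z1 + ereal n * logabs z2"
proof -
  have "ln x \<le> ln (norm z1 ^ m * norm z2 ^ n)" using assms by simp
  also have "\<dots> = m * ln (norm z1) + n * ln (norm z2)" using assms by (simp add: ln_mult ln_realpow)
  finally show ?thesis using assms(3,4) by (simp add: logabs_def)
qed

lemma L_a0b0_ge:
  assumes "a \<noteq> 0" "b = - a" "\<gamma> \<noteq> 0"
  shows "ereal (ln (norm \<gamma>)) \<le> L_a0b0 a b (0, \<gamma>)"
proof -
  have "ereal (ln (norm \<gamma>)) \<le> logabs z1 + logabs z2"
    if "disc_map f g" "f 0 = 0" "g 0 = \<gamma>" "norm z1 < 1" "norm z2 < 1"
      "f z1 = a" "g z1 = 0" "f z2 = - a" "g z2 = 0" for f g z1 z2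
  proof -
    have g: "g holomorphic_on ball 0 1" "\<forall>z\<in>ball 0 1. norm (g z) \<le> 1"
      using that(1) by (auto simp: disc_map_def image_subset_iff less_imp_le)
    have "z1 \<noteq> 0" "z2 \<noteq> 0" "z1 \<noteq> z2" using that assms(1) by auto
    moreover have "norm \<gamma> \<le> norm z1 ^ 1 * norm z2 ^ 1"
      using norm_at_0_le_product_of_zeros[OF g that(4,5,7,9)] \<open>z1 \<noteq> z2\<close> that(3) by simp
    ultimately show ?thesis using ln_le_logabs_combination[of "norm \<gamma>" z1 1 z2 1] assms(3) by simp
  qed
  then show ?thesis unfolding L_a0b0_def assms(2) by (auto intro!: Inf_greatest)
qed

lemma L_aVb0_gap:
  assumes a: "a \<noteq> 0" "norm a < 1" and "b = - a"
  obtains \<kappa> where "1 < \<kappa>" "ereal (ln ((norm a)\<^sup>2 * \<kappa>)) \<le> L_aVb0 a b (0, \<gamma>)"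
proof -
  obtain \<kappa> where \<kappa>: "1 < \<kappa>" and bound: "\<And>f p q. f holomorphic_on ball 0 1 \<Longrightarrow>
       f ` ball 0 1 \<subseteq> ball 0 1 \<Longrightarrow> f 0 = 0 \<Longrightarrow> norm p < 1 \<Longrightarrow> norm q < 1 \<Longrightarrow>
       f p = a \<Longrightarrow> deriv f p = 0 \<Longrightarrow> f q = - a \<Longrightarrow> (norm a)\<^sup>2 * \<kappa> \<le> (norm p)\<^sup>2 * norm q"
    by (rule critical_and_opposite_value_product_bound[OF a]) auto
  have "ereal (ln ((norm a)\<^sup>2 * \<kappa>)) \<le> 2 * logabs z1 + logabs z2"
    if "disc_map f g" "f 0 = 0" "norm z1 < 1" "norm z2 < 1" "f z1 = a" "f z2 = - a" "deriv f z1 = 0"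
    for f g z1 z2
  proof -
    have f: "f holomorphic_on ball 0 1" "f ` ball 0 1 \<subseteq> ball 0 1"
      using that(1) by (auto simp: disc_map_def)
    have "z1 \<noteq> 0" "z2 \<noteq> 0" using that a by auto
    moreover have "(norm a)\<^sup>2 * \<kappa> \<le> norm z1 ^ 2 * norm z2 ^ 1"
      using bound[OF f that(2-5,7,6)] by simp
    ultimately show ?thesis
      using ln_le_logabs_combination[of "(norm a)\<^sup>2 * \<kappa>" z1 2 z2 1] a \<kappa> by simp
  qed
  then have "ereal (ln ((norm a)\<^sup>2 * \<kappa>)) \<le> L_aVb0 a b (0, \<gamma>)"
    unfolding L_aVb0_def assms(3) by (auto intro!: Inf_greatest)
  with \<kappa> show thesis by (rule that)
qed

lemma L_a0bV_gap:
  assumes a: "a \<noteq> 0" "norm a < 1" and "b = - a"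
  obtains \<kappa> where "1 < \<kappa>" "ereal (ln ((norm a)\<^sup>2 * \<kappa>)) \<le> L_a0bV a b (0, \<gamma>)"
proof -
  have "- a \<noteq> 0" "norm (- a) < 1" using a by auto
  then obtain \<kappa> where \<kappa>: "1 < \<kappa>" and bound: "\<And>f p q. f holomorphic_on ball 0 1 \<Longrightarrow>
       f ` ball 0 1 \<subseteq> ball 0 1 \<Longrightarrow> f 0 = 0 \<Longrightarrow> norm p < 1 \<Longrightarrow> norm q < 1 \<Longrightarrow>
       f p = - a \<Longrightarrow> deriv f p = 0 \<Longrightarrow> f q = - (- a) \<Longrightarrow> (norm (- a))\<^sup>2 * \<kappa> \<le> (norm p)\<^sup>2 * norm q"
    by (rule critical_and_opposite_value_product_bound) auto
  have "ereal (ln ((norm a)\<^sup>2 * \<kappa>)) \<le> logabs z1 + 2 * logabs z2"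
    if "disc_map f g" "f 0 = 0" "norm z1 < 1" "norm z2 < 1" "f z1 = a" "f z2 = - a" "deriv f z2 = 0"
    for f g z1 z2
  proof -
    have f: "f holomorphic_on ball 0 1" "f ` ball 0 1 \<subseteq> ball 0 1"
      using that(1) by (auto simp: disc_map_def)
    have "z1 \<noteq> 0" "z2 \<noteq> 0" using that a by auto
    moreover have "(norm a)\<^sup>2 * \<kappa> \<le> norm z1 ^ 1 * norm z2 ^ 2"
      using bound[OF f that(2) that(4) that(3) that(6) that(7)] that(5) by (simp add: mult.commute)
    ultimately show ?thesis
      using ln_le_logabs_combination[of "(norm a)\<^sup>2 * \<kappa>" z1 1 z2 2] a \<kappa> by simp
  qed
  then have "ereal (ln ((norm a)\<^sup>2 * \<kappa>)) \<le> L_a0bV a b (0, \<gamma>)"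
    unfolding L_a0bV_def assms(3) by (auto intro!: Inf_greatest)
  with \<kappa> show thesis by (rule that)
qed

lemma L_aVbV_gap:
  assumes a: "a \<noteq> 0" "norm a < 1" and "b = - a"
  obtains \<kappa> where "1 < \<kappa>" "ereal (ln ((norm a)\<^sup>2 * \<kappa>)) \<le> L_aVbV a b (0, \<gamma>)"
proof -
  obtain \<kappa> where \<kappa>: "1 < \<kappa>" and bound: "\<And>f p q. f holomorphic_on ball 0 1 \<Longrightarrow>
       f ` ball 0 1 \<subseteq> ball 0 1 \<Longrightarrow> f 0 = 0 \<Longrightarrow> norm p < 1 \<Longrightarrow> norm q < 1 \<Longrightarrow>
       f p = a \<Longrightarrow> deriv f p = 0 \<Longrightarrow> f q = - a \<Longrightarrow> deriv f q = 0 \<Longrightarrow>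
       (norm a)\<^sup>2 * \<kappa> \<le> (norm p)\<^sup>2 * (norm q)\<^sup>2"
    by (rule two_critical_points_product_bound[OF a]) auto
  have "ereal (ln ((norm a)\<^sup>2 * \<kappa>)) \<le> 2 * logabs z1 + 2 * logabs z2"
    if "disc_map f g" "f 0 = 0" "norm z1 < 1" "norm z2 < 1" "f z1 = a" "f z2 = - a"
      "deriv f z1 = 0" "deriv f z2 = 0" for f g z1 z2
  proof -
    have f: "f holomorphic_on ball 0 1" "f ` ball 0 1 \<subseteq> ball 0 1"
      using that(1) by (auto simp: disc_map_def)
    have "z1 \<noteq> 0" "z2 \<noteq> 0" using that a by auto
    moreover have "(norm a)\<^sup>2 * \<kappa> \<le> norm z1 ^ 2 * norm z2 ^ 2"
      using bound[OF f that(2-5,7,6,8)] by simp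
    ultimately show ?thesis
      using ln_le_logabs_combination[of "(norm a)\<^sup>2 * \<kappa>" z1 2 z2 2] a \<kappa> by simp
  qed
  then have "ereal (ln ((norm a)\<^sup>2 * \<kappa>)) \<le> L_aVbV a b (0, \<gamma>)"
    unfolding L_aVbV_def assms(3) by (auto intro!: Inf_greatest)
  with \<kappa> show thesis by (rule that)
qed

lemma lempert_functions_gap:
  assumes a: "a \<noteq> 0" "norm a < 1" and b: "b = - a" and \<gamma>: "(norm a)\<^sup>2 < norm \<gamma>"
  obtains \<kappa> where "1 < \<kappa>"
    "ereal (ln ((norm a)\<^sup>2 * \<kappa>)) \<le> min (min (L_a0b0 a b (0, \<gamma>)) (L_aVb0 a b (0, \<gamma>)))
                                         (min (L_a0bV a b (0, \<gamma>)) (L_aVbV a b (0, \<gamma>)))"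
proof -
  obtain \<kappa>1 where \<kappa>1: "1 < \<kappa>1" "ereal (ln ((norm a)\<^sup>2 * \<kappa>1)) \<le> L_aVb0 a b (0, \<gamma>)"
    using L_aVb0_gap[OF a b] by blast
  obtain \<kappa>2 where \<kappa>2: "1 < \<kappa>2" "ereal (ln ((norm a)\<^sup>2 * \<kappa>2)) \<le> L_a0bV a b (0, \<gamma>)"
    using L_a0bV_gap[OF a b] by blast
  obtain \<kappa>3 where \<kappa>3: "1 < \<kappa>3" "ereal (ln ((norm a)\<^sup>2 * \<kappa>3)) \<le> L_aVbV a b (0, \<gamma>)"
    using L_aVbV_gap[OF a b] by blast
  have "\<gamma> \<noteq> 0" using \<gamma> by (metis norm_zero not_less zero_le_power2)
  define \<kappa>0 where "\<kappa>0 = norm \<gamma> / (norm a)\<^sup>2"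
  have \<kappa>0: "1 < \<kappa>0" "ereal (ln ((norm a)\<^sup>2 * \<kappa>0)) \<le> L_a0b0 a b (0, \<gamma>)"
    using \<gamma> a L_a0b0_ge[OF a(1) b \<open>\<gamma> \<noteq> 0\<close>] by (auto simp: \<kappa>0_def)
  define \<kappa> where "\<kappa> = min (min \<kappa>0 \<kappa>1) (min \<kappa>2 \<kappa>3)"
  have mono: "ereal (ln ((norm a)\<^sup>2 * \<kappa>)) \<le> ereal (ln ((norm a)\<^sup>2 * \<kappa>'))" if "\<kappa> \<le> \<kappa>'" for \<kappa>'
    using that a \<kappa>0 \<kappa>1 \<kappa>2 \<kappa>3 by (simp add: \<kappa>_def)
  show thesis
  proof (rule that)
    show "1 < \<kappa>" using \<kappa>0 \<kappa>1 \<kappa>2 \<kappa>3 by (simp add: \<kappa>_def)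
    show "ereal (ln ((norm a)\<^sup>2 * \<kappa>)) \<le> min (min (L_a0b0 a b (0, \<gamma>)) (L_aVb0 a b (0, \<gamma>)))
                                         (min (L_a0bV a b (0, \<gamma>)) (L_aVbV a b (0, \<gamma>)))"
      using order_trans[OF mono \<kappa>0(2)] order_trans[OF mono \<kappa>1(2)] order_trans[OF mono \<kappa>2(2)]
        order_trans[OF mono \<kappa>3(2)] by (simp add: \<kappa>_def)
  qed
qed

section \<open>Three-point interpolation\<close>

text \<open>
  One step of Schur's algorithm: if \<open>K\<close> is a self-map of the disc with \<open>K x0 = w0\<close>, then
  \<open>(blaschke w0 \<circ> K) / blaschke x0\<close> takes the value \<open>schur_value x0 w0 x (K x)\<close> at \<open>x \<noteq> x0\<close>.
\<close>

definition schur_value :: "complex \<Rightarrow> complex \<Rightarrow> complex \<Rightarrow> complex \<Rightarrow> complex" where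
  "schur_value x0 w0 x w = blaschke w0 w / blaschke x0 x"

lemma norm_mult_less_1:
  fixes x y :: complex
  assumes "norm x < 1" "norm y \<le> 1"
  shows "norm (x * y) < 1"
proof -
  have "norm x * norm y \<le> norm x" using assms by (simp add: mult_left_le)
  then show ?thesis using assms by (simp add: norm_mult)
qed

lemma schur_step:
  assumes x0: "norm x0 < 1" and w0: "norm w0 < 1"
    and hol: "k holomorphic_on ball 0 1" and le: "\<forall>x\<in>ball 0 1. norm (k x) \<le> 1"
  defines "K \<equiv> \<lambda>x. blaschke (- w0) (blaschke x0 x * k x)"
  shows "K holomorphic_on ball 0 1" and "K ` ball 0 1 \<subseteq> ball 0 1" and "K x0 = w0"
    and "\<And>x w. norm x < 1 \<Longrightarrow> norm w < 1 \<Longrightarrow> x \<noteq> x0 \<Longrightarrow> k x = schur_value x0 w0 x w \<Longrightarrow> K x = w"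
proof -
  have mw0: "norm (- w0) < 1" using w0 by simp
  have prod: "norm (blaschke x0 x * k x) < 1" if "norm x < 1" for x
    using norm_mult_less_1[OF norm_blaschke_less_1[OF x0 that]] le that by simp
  show "K holomorphic_on ball 0 1"
    unfolding K_def by (intro holomorphic_on_blaschke_comp mw0 holomorphic_intros blaschke_holomorphic x0 hol)
       (use prod in auto)
  show "K ` ball 0 1 \<subseteq> ball 0 1"
    using norm_blaschke_less_1[OF mw0 prod] by (auto simp: K_def)
  show "K x0 = w0" by (simp add: K_def)
  fix x w assume x: "norm x < 1" and w: "norm w < 1" and "x \<noteq> x0" and kx: "k x = schur_value x0 w0 x w"
  have "blaschke x0 x \<noteq> 0" using blaschke_eq_0_iff[OF x0 x] \<open>x \<noteq> x0\<close> by simp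
  then have "blaschke x0 x * k x = blaschke w0 w" by (simp add: kx schur_value_def)
  then show "K x = w" using blaschke_inverse[OF w0 w] by (simp add: K_def)
qed

lemma three_point_interpolation:
  assumes x: "norm x1 < 1" "norm x2 < 1" "norm x3 < 1" "x1 \<noteq> x2" "x1 \<noteq> x3" "x2 \<noteq> x3"
    and w: "norm w1 < 1" "norm w2 < 1" "norm w3 < 1"
    and k: "norm (schur_value x1 w1 x2 w2) < 1" "norm (schur_value x1 w1 x3 w3) < 1"
    and \<tau>: "norm (schur_value x2 (schur_value x1 w1 x2 w2) x3 (schur_value x1 w1 x3 w3)) \<le> 1"
  obtains K where "K holomorphic_on ball 0 1" "K ` ball 0 1 \<subseteq> ball 0 1"
    "K x1 = w1" "K x2 = w2" "K x3 = w3"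
proof -
  define k2 where "k2 = schur_value x1 w1 x2 w2"
  define k3 where "k3 = schur_value x1 w1 x3 w3"
  define \<tau> where "\<tau> = schur_value x2 k2 x3 k3"
  define k where "k = (\<lambda>x. blaschke (- k2) (blaschke x2 x * \<tau>))"
  have step_k: "k holomorphic_on ball 0 1" "k ` ball 0 1 \<subseteq> ball 0 1" "k x2 = k2" "k x3 = k3"
    using schur_step[of x2 k2 "\<lambda>_. \<tau>"] x k \<tau> by (auto simp: k_def k2_def k3_def \<tau>_def)
  have "\<forall>x\<in>ball 0 1. norm (k x) \<le> 1"
    using self_map_norm_less_1[OF step_k(2)] by (auto simp: less_imp_le)
  note step_K = schur_step[OF x(1) w(1) step_k(1) this]
  show thesis
  proof (rule that[OF step_K(1,2,3)])
    show "blaschke (- w1) (blaschke x1 x2 * k x2) = w2"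
      by (rule step_K(4)) (use x w step_k in \<open>auto simp: k2_def\<close>)
    show "blaschke (- w1) (blaschke x1 x3 * k x3) = w3"
      by (rule step_K(4)) (use x w step_k in \<open>auto simp: k3_def\<close>)
  qed
qed

lemma tendsto_schur_value [tendsto_intros]:
  assumes "(x0 \<longlongrightarrow> \<xi>0) F" "(w0 \<longlongrightarrow> \<omega>0) F" "(x \<longlongrightarrow> \<xi>) F" "(w \<longlongrightarrow> \<omega>) F"
    and "norm \<xi>0 < 1" "norm \<xi> < 1" "\<xi> \<noteq> \<xi>0" "norm \<omega>0 < 1" "norm \<omega> < 1"
  shows "((\<lambda>t. schur_value (x0 t) (w0 t) (x t) (w t)) \<longlongrightarrow> schur_value \<xi>0 \<omega>0 \<xi> \<omega>) F"
  unfolding schur_value_def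
  by (intro tendsto_intros assms blaschke_denom_nonzero) (use assms blaschke_eq_0_iff in auto)

lemma eventually_norm_less:
  assumes "(h \<longlongrightarrow> L) F" "norm L < c"
  shows "\<forall>\<^sub>F t in F. norm (h t) < c"
  using order_tendstoD(2)[OF tendsto_norm[OF assms(1)] assms(2)] .

lemma eventually_three_point_interpolation:
  assumes x: "(x1 \<longlongrightarrow> \<xi>1) F" "(x2 \<longlongrightarrow> \<xi>2) F" "(x3 \<longlongrightarrow> \<xi>3) F"
    and w: "(w1 \<longlongrightarrow> \<omega>1) F" "(w2 \<longlongrightarrow> \<omega>2) F" "(w3 \<longlongrightarrow> \<omega>3) F"
    and \<xi>: "norm \<xi>1 < 1" "norm \<xi>2 < 1" "norm \<xi>3 < 1" "\<xi>1 \<noteq> \<xi>2" "\<xi>1 \<noteq> \<xi>3" "\<xi>2 \<noteq> \<xi>3"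
    and \<omega>: "norm \<omega>1 < 1" "norm \<omega>2 < 1" "norm \<omega>3 < 1"
    and k: "norm (schur_value \<xi>1 \<omega>1 \<xi>2 \<omega>2) < 1" "norm (schur_value \<xi>1 \<omega>1 \<xi>3 \<omega>3) < 1"
    and \<tau>: "norm (schur_value \<xi>2 (schur_value \<xi>1 \<omega>1 \<xi>2 \<omega>2) \<xi>3 (schur_value \<xi>1 \<omega>1 \<xi>3 \<omega>3)) < 1"
  shows "\<forall>\<^sub>F t in F. \<exists>K. K holomorphic_on ball 0 1 \<and> K ` ball 0 1 \<subseteq> ball 0 1 \<and>
           K (x1 t) = w1 t \<and> K (x2 t) = w2 t \<and> K (x3 t) = w3 t"
proof -
  have ne: "\<forall>\<^sub>F t in F. x t \<noteq> y t"
    if "(x \<longlongrightarrow> \<xi>) F" "(y \<longlongrightarrow> \<eta>) F" "\<xi> \<noteq> \<eta>" for x y :: "_ \<Rightarrow> complex" and \<xi> \<eta>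
    using tendsto_imp_eventually_ne[OF tendsto_diff[OF that(1,2)], of 0] that(3) by simp
  have lim_k: "((\<lambda>t. schur_value (x1 t) (w1 t) (x2 t) (w2 t)) \<longlongrightarrow> schur_value \<xi>1 \<omega>1 \<xi>2 \<omega>2) F"
    "((\<lambda>t. schur_value (x1 t) (w1 t) (x3 t) (w3 t)) \<longlongrightarrow> schur_value \<xi>1 \<omega>1 \<xi>3 \<omega>3) F"
    using \<xi> \<omega> by (auto intro!: tendsto_schur_value x w)
  have "((\<lambda>t. schur_value (x2 t) (schur_value (x1 t) (w1 t) (x2 t) (w2 t)) (x3 t)
          (schur_value (x1 t) (w1 t) (x3 t) (w3 t))) \<longlongrightarrow>
        schur_value \<xi>2 (schur_value \<xi>1 \<omega>1 \<xi>2 \<omega>2) \<xi>3 (schur_value \<xi>1 \<omega>1 \<xi>3 \<omega>3)) F"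
    by (rule tendsto_schur_value[OF x(2) lim_k(1) x(3) lim_k(2)]) (use \<xi> k in auto)
  note evs = eventually_norm_less[OF x(1) \<xi>(1)] eventually_norm_less[OF x(2) \<xi>(2)]
    eventually_norm_less[OF x(3) \<xi>(3)] ne[OF x(1,2) \<xi>(4)] ne[OF x(1,3) \<xi>(5)] ne[OF x(2,3) \<xi>(6)]
    eventually_norm_less[OF w(1) \<omega>(1)] eventually_norm_less[OF w(2) \<omega>(2)]
    eventually_norm_less[OF w(3) \<omega>(3)] eventually_norm_less[OF lim_k(1) k(1)]
    eventually_norm_less[OF lim_k(2) k(2)] eventually_norm_less[OF this \<tau>]
  show ?thesis
    using evs
  proof eventually_elim
    case (elim t)
    obtain K where "K holomorphic_on ball 0 1" "K ` ball 0 1 \<subseteq> ball 0 1"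
      "K (x1 t) = w1 t" "K (x2 t) = w2 t" "K (x3 t) = w3 t"
      by (rule three_point_interpolation[OF elim(1-11) less_imp_le[OF elim(12)]])
    then show ?case by blast
  qed
qed

section \<open>Competitors for the four-pole Lempert function\<close>

lemma coman_lempert_four_poles_le:
  assumes "disc_map f g" "f 0 = 0" "g 0 = \<gamma>"
    and z: "norm z1 < 1" "norm z2 < 1" "norm z3 < 1" "norm z4 < 1"
    and f: "f z1 = p" "f z2 = - p" "f z3 = - p" "f z4 = p"
    and g: "g z1 = 0" "g z2 = 0" "g z3 = \<epsilon>" "g z4 = \<epsilon>"
    and \<rho>: "0 < \<rho>" "norm z1 * norm z4 = \<rho>" "norm z2 * norm z3 = \<rho>"
  shows "coman_lempert [(p, 0), (- p, 0), (- p, \<epsilon>), (p, \<epsilon>)] (0, \<gamma>) \<le> ereal (2 * ln \<rho>)"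
proof -
  have nz: "z1 \<noteq> 0" "z2 \<noteq> 0" "z3 \<noteq> 0" "z4 \<noteq> 0" using \<rho> by auto
  have "ln \<rho> = ln (norm z1) + ln (norm z4)" using nz by (simp add: \<rho>(2)[symmetric] ln_mult)
  moreover have "ln \<rho> = ln (norm z2) + ln (norm z3)" using nz by (simp add: \<rho>(3)[symmetric] ln_mult)
  ultimately have "sum_list (map logabs [z1, z2, z3, z4]) = ereal (2 * ln \<rho>)"
    using nz by (simp add: logabs_def)
  moreover have "coman_lempert [(p, 0), (- p, 0), (- p, \<epsilon>), (p, \<epsilon>)] (0, \<gamma>)
      \<le> sum_list (map logabs [z1, z2, z3, z4])"
    unfolding coman_lempert_def using assms
    by (intro Inf_lower CollectI exI[of _ f] exI[of _ g] exI[of _ "[z1, z2, z3, z4]"])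
       (auto simp: less_Suc_eq nth_Cons')
  ultimately show ?thesis by simp
qed

lemma competitor_nodes:
  assumes a: "a \<noteq> 0" "norm a < 1" and u: "norm u < 1"
    and X_def: "X = blaschke (- u\<^sup>2) (- a)" and c_def: "c = a / blaschke X (u\<^sup>2)"
    and W_def: "W = blaschke (- X) (- a / c)"
  shows "norm X < 1" "norm W < 1" "norm c = 1" "blaschke X (u\<^sup>2) = a / c" "blaschke X W = - a / c"
proof -
  have s: "norm (u\<^sup>2) < 1" using u by (simp add: norm_power abs_square_less_1)
  have ma: "norm (- a) < 1" using a by simp
  show X1: "norm X < 1" using norm_blaschke_less_1[of "- u\<^sup>2" "- a"] s ma by (simp add: X_def)
  have "blaschke (u\<^sup>2) X = - a" unfolding X_def by (rule blaschke_inverse'[OF s ma])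
  then have nXs: "norm (blaschke X (u\<^sup>2)) = norm a" using norm_blaschke_commute by (metis norm_minus_cancel)
  then show c1: "norm c = 1" using a by (simp add: c_def norm_divide)
  show "blaschke X (u\<^sup>2) = a / c" using nXs a by (auto simp: c_def)
  have \<nu>: "norm (- a / c) < 1" using c1 a by (simp add: norm_divide)
  show "norm W < 1" using norm_blaschke_less_1[of "- X" "- a / c"] X1 \<nu> by (simp add: W_def)
  show "blaschke X W = - a / c" unfolding W_def by (rule blaschke_inverse'[OF X1 \<nu>])
qed

lemma branched_disc_map:
  fixes \<beta> X c \<epsilon> :: complex and r q :: real
  assumes \<beta>: "norm \<beta> < 1" and X: "norm X < 1" and c: "norm c = 1" and r: "0 < r" "r < 1"
    and K: "K holomorphic_on ball 0 1" "K ` ball 0 1 \<subseteq> ball 0 1" and q: "0 < q" "norm \<epsilon> / 2 + q \<le> 1"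
  shows "disc_map (\<lambda>t. r * c * blaschke X ((blaschke \<beta> t)\<^sup>2))
                  (\<lambda>t. \<epsilon> / 2 + q * blaschke \<beta> t * K ((blaschke \<beta> t)\<^sup>2))"
proof -
  have m: "norm (blaschke \<beta> t) < 1" "norm ((blaschke \<beta> t)\<^sup>2) < 1" if "norm t < 1" for t
    using norm_blaschke_less_1[OF \<beta> that] by (simp_all add: norm_power abs_square_less_1)
  have hol_m: "(\<lambda>t. (blaschke \<beta> t)\<^sup>2) holomorphic_on ball 0 1"
    by (intro holomorphic_intros blaschke_holomorphic \<beta>)
  have img_m: "(\<lambda>t. (blaschke \<beta> t)\<^sup>2) ` ball 0 1 \<subseteq> ball 0 1" using m by auto
  have "(\<lambda>t. blaschke X ((blaschke \<beta> t)\<^sup>2)) holomorphic_on ball 0 1"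
    by (rule holomorphic_on_blaschke_comp[OF X hol_m]) (use m in auto)
  then have hol_f: "(\<lambda>t. r * c * blaschke X ((blaschke \<beta> t)\<^sup>2)) holomorphic_on ball 0 1"
    by (rule holomorphic_on_mult[OF holomorphic_on_const])
  have "(\<lambda>t. K ((blaschke \<beta> t)\<^sup>2)) holomorphic_on ball 0 1"
    using holomorphic_on_compose_gen[OF hol_m K(1) img_m] by (simp add: o_def)
  moreover have "(\<lambda>t. q * blaschke \<beta> t) holomorphic_on ball 0 1"
    using blaschke_holomorphic[OF \<beta>] by (rule holomorphic_on_mult[OF holomorphic_on_const])
  ultimately have hol_g: "(\<lambda>t. \<epsilon> / 2 + q * blaschke \<beta> t * K ((blaschke \<beta> t)\<^sup>2)) holomorphic_on ball 0 1"
    by (intro holomorphic_on_add[OF holomorphic_on_const]) (rule holomorphic_on_mult)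
  have f_lt: "norm (r * c * blaschke X ((blaschke \<beta> t)\<^sup>2)) < 1" if "norm t < 1" for t
  proof -
    have "r * norm (blaschke X ((blaschke \<beta> t)\<^sup>2)) \<le> norm (blaschke X ((blaschke \<beta> t)\<^sup>2))"
      using r by (intro mult_left_le_one_le) auto
    then show ?thesis using norm_blaschke_less_1[OF X m(2)[OF that]] r c by (simp add: norm_mult)
  qed
  have g_lt: "norm (\<epsilon> / 2 + q * blaschke \<beta> t * K ((blaschke \<beta> t)\<^sup>2)) < 1" if "norm t < 1" for t
  proof -
    have "norm (blaschke \<beta> t * K ((blaschke \<beta> t)\<^sup>2)) < 1"
      using norm_mult_less_1[OF m(1)[OF that]] self_map_norm_less_1[OF K(2) m(2)[OF that]] by simp
    then have "norm (q * blaschke \<beta> t * K ((blaschke \<beta> t)\<^sup>2)) < q"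
      using q by (simp add: norm_mult mult.assoc)
    then show ?thesis using q by (intro norm_triangle_lt) (simp add: norm_divide)
  qed
  show ?thesis using hol_f hol_g f_lt g_lt by (auto simp: disc_map_def)
qed

lemma four_pole_competitor:
  fixes a u X c W \<beta> v \<epsilon> \<gamma> :: complex and r q :: real
  assumes a: "a \<noteq> 0" "norm a < 1" and r: "0 < r" "r < 1" and u: "u \<noteq> 0" "norm u < 1"
    and X_def: "X = blaschke (- u\<^sup>2) (- a)" and c_def: "c = a / blaschke X (u\<^sup>2)"
    and W_def: "W = blaschke (- X) (- a / c)" and q_def: "q = 1 - norm \<epsilon> / 2"
    and \<beta>: "\<beta>\<^sup>2 = X" "\<beta> \<noteq> 0" and v: "v\<^sup>2 = W" "v \<noteq> 0" and \<epsilon>: "norm \<epsilon> < 2"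
    and K: "K holomorphic_on ball 0 1" "K ` ball 0 1 \<subseteq> ball 0 1"
      "K (u\<^sup>2) = - \<epsilon> / (2 * u * q)" "K W = - \<epsilon> / (2 * v * q)" "K X = (\<epsilon> / 2 - \<gamma>) / (\<beta> * q)"
  shows "coman_lempert [(r * a, 0), (- (r * a), 0), (- (r * a), \<epsilon>), (r * a, \<epsilon>)] (0, \<gamma>)
           \<le> ereal (2 * ln (norm a))"
proof -
  note nodes = competitor_nodes[OF a u(2) X_def c_def W_def]
  have \<beta>1: "norm \<beta> < 1" using nodes(1) \<beta>(1) by (metis abs_square_less_1 abs_norm_cancel norm_power)
  have v1: "norm v < 1" using nodes(2) v(1) by (metis abs_square_less_1 abs_norm_cancel norm_power)
  have q: "0 < q" "norm \<epsilon> / 2 + q \<le> 1" using \<epsilon> by (auto simp: q_def)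
  define f where "f = (\<lambda>t. r * c * blaschke X ((blaschke \<beta> t)\<^sup>2))"
  define g where "g = (\<lambda>t. \<epsilon> / 2 + q * blaschke \<beta> t * K ((blaschke \<beta> t)\<^sup>2))"
  have "disc_map f g"
    unfolding f_def g_def by (rule branched_disc_map[OF \<beta>1 nodes(1,3) r K(1,2) q])
  \<comment> \<open>\<open>f\<close> depends on \<open>m = blaschke \<beta>\<close> only through \<open>m\<^sup>2\<close>, so the two points of each pair
    \<open>m = \<plusminus>u\<close>, \<open>m = \<plusminus>v\<close> have the same image, while the odd term \<open>q m K(m\<^sup>2)\<close> of \<open>g\<close> separates them.\<close>
  define z where "z = (\<lambda>w. blaschke (- \<beta>) w)"
  have z: "norm (z w) < 1" "blaschke \<beta> (z w) = w" if "norm w < 1" for w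
    using norm_blaschke_less_1[of "- \<beta>" w] blaschke_inverse'[OF \<beta>1 that] \<beta>1 that by (auto simp: z_def)
  have u': "norm (- u) < 1" and v': "norm (- v) < 1" using u v1 by auto
  have q0: "complex_of_real q \<noteq> 0" using q by simp
  show ?thesis
  proof (rule coman_lempert_four_poles_le[OF \<open>disc_map f g\<close>])
    show "f 0 = 0" "g 0 = \<gamma>" using \<beta> K(5) q0 by (simp_all add: f_def g_def field_simps power2_eq_square)
    show "f (z u) = r * a" "f (z v) = - (r * a)" "f (z (- v)) = - (r * a)" "f (z (- u)) = r * a"
      using z[OF u(2)] z[OF u'] z[OF v1] z[OF v'] nodes(3-5) v(1) by (auto simp: f_def)
    show "g (z u) = 0" "g (z v) = 0" "g (z (- v)) = \<epsilon>" "g (z (- u)) = \<epsilon>"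
      using z[OF u(2)] z[OF u'] z[OF v1] z[OF v'] K(3,4) v(1) u(1) v(2) q0
      by (auto simp: g_def field_simps)
    show "norm (z u) * norm (z (- u)) = norm a" "norm (z v) * norm (z (- v)) = norm a"
      using blaschke_product_opposite[OF \<beta>1 u(2)] blaschke_product_opposite[OF \<beta>1 v1] nodes(3-5)
        \<beta>(1) v(1) a
      by (auto simp: z_def norm_mult[symmetric] norm_divide)
  qed (use a z[OF u(2)] z[OF u'] z[OF v1] z[OF v'] in auto)
qed

lemma square_of_sqrt_branch: "\<rho> \<noteq> 0 \<Longrightarrow> (\<rho> * csqrt (z / \<rho>\<^sup>2))\<^sup>2 = z"
  by (simp add: power_mult_distrib)

lemma tendsto_sqrt_branch:
  assumes "(h \<longlongrightarrow> \<rho>\<^sup>2) F" "\<rho> \<noteq> 0"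
  shows "((\<lambda>t. \<rho> * csqrt (h t / \<rho>\<^sup>2)) \<longlongrightarrow> \<rho>) F"
proof -
  have "((\<lambda>t. h t / \<rho>\<^sup>2) \<longlongrightarrow> 1) F"
    using tendsto_divide[OF assms(1) tendsto_const, of "\<rho>\<^sup>2"] assms(2) by simp
  moreover have "isCont csqrt 1"
    by (rule continuous_at_csqrt) (simp add: complex_nonpos_Reals_iff)
  ultimately have "((\<lambda>t. csqrt (h t / \<rho>\<^sup>2)) \<longlongrightarrow> 1) F"
    using isCont_tendsto_compose by fastforce
  then show ?thesis using tendsto_mult_left[of _ 1 F \<rho>] by simp
qed

lemma tendsto_competitor_nodes:
  fixes a :: complex and u :: "'a \<Rightarrow> complex"
  assumes a: "a \<noteq> 0" "norm a < 1" and u: "(u \<longlongrightarrow> 0) F"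
    and X_def: "X = (\<lambda>t. blaschke (- (u t)\<^sup>2) (- a))"
    and c_def: "c = (\<lambda>t. a / blaschke (X t) ((u t)\<^sup>2))"
    and W_def: "W = (\<lambda>t. blaschke (- X t) (- a / c t))"
  shows "(X \<longlongrightarrow> - a) F" "(W \<longlongrightarrow> blaschke a (- a)) F"
proof -
  have s: "((\<lambda>t. (u t)\<^sup>2) \<longlongrightarrow> 0) F" using tendsto_power[OF u, of 2] by simp
  show X: "(X \<longlongrightarrow> - a) F"
    unfolding X_def using tendsto_blaschke[OF tendsto_minus[OF s] tendsto_const, of "- a"] by simp
  have "((\<lambda>t. blaschke (X t) ((u t)\<^sup>2)) \<longlongrightarrow> a) F"
    using tendsto_blaschke[OF X s] by simp
  then have "(c \<longlongrightarrow> 1) F"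
    unfolding c_def using tendsto_divide[OF tendsto_const, of _ a _ a] a by simp
  then show "(W \<longlongrightarrow> blaschke a (- a)) F"
    unfolding W_def using tendsto_blaschke[OF tendsto_minus[OF X] tendsto_divide[OF tendsto_const],
        of _ 1 "- a"] blaschke_denom_nonzero[of a "- a"] a
    by simp
qed

lemma degenerate_three_point_data:
  fixes a \<omega> :: complex
  assumes a: "a \<noteq> 0" "norm a < 1" and \<omega>: "norm \<omega> < norm a"
  defines "W0 \<equiv> blaschke a (- a)"
  shows "norm W0 < 1" "W0 \<noteq> 0" "W0 \<noteq> - a" "norm (schur_value W0 0 (- a) \<omega>) < 1"
    "norm (schur_value W0 0 0 (- W0 * schur_value W0 0 (- a) \<omega>)) < 1"
    "norm (schur_value (- a) (schur_value W0 0 (- a) \<omega>) 0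
       (schur_value W0 0 0 (- W0 * schur_value W0 0 (- a) \<omega>))) < 1"
proof -
  have ma: "norm (- a) < 1" using a by simp
  show W0: "norm W0 < 1" using norm_blaschke_less_1[OF a(2) ma] by (simp add: W0_def)
  have "blaschke (- a) W0 = - a" unfolding W0_def by (rule blaschke_inverse[OF a(2) ma])
  then show W00: "W0 \<noteq> 0" using a by auto
  have nW0: "norm (blaschke W0 (- a)) = norm a"
    using \<open>blaschke (- a) W0 = - a\<close> norm_blaschke_commute by (metis norm_minus_cancel)
  then show "W0 \<noteq> - a" using a by auto
  define \<kappa> where "\<kappa> = schur_value W0 0 (- a) \<omega>"
  have \<kappa>: "norm \<kappa> < 1" using \<omega> a nW0 by (simp add: \<kappa>_def schur_value_def norm_divide divide_less_eq)
  then show "norm (schur_value W0 0 (- a) \<omega>) < 1" by (simp add: \<kappa>_def)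
  have "schur_value W0 0 0 (- W0 * \<kappa>) = \<kappa>" using W00 by (simp add: schur_value_def)
  then show "norm (schur_value W0 0 0 (- W0 * schur_value W0 0 (- a) \<omega>)) < 1"
    "norm (schur_value (- a) (schur_value W0 0 (- a) \<omega>) 0
       (schur_value W0 0 0 (- W0 * schur_value W0 0 (- a) \<omega>))) < 1"
    using \<kappa> by (simp_all add: \<kappa>_def schur_value_def)
qed

lemma coman_lempert_eventually_le:
  fixes a' \<beta>0 \<gamma> :: complex and r :: real
  assumes a': "a' \<noteq> 0" "norm a' < 1" and r: "0 < r" "r < 1"
    and \<beta>0: "\<beta>0\<^sup>2 = - a'" and \<gamma>: "\<gamma> \<noteq> 0" and \<omega>: "norm (- \<gamma> / \<beta>0) < norm a'"
  shows "\<forall>\<^sub>F \<epsilon> in at 0. coman_lempert [(r * a', 0), (- (r * a'), 0), (- (r * a'), \<epsilon>), (r * a', \<epsilon>)] (0, \<gamma>)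
           \<le> ereal (2 * ln (norm a'))"
proof -
  have "\<beta>0 \<noteq> 0" using \<beta>0 a' by auto
  note data = degenerate_three_point_data[OF a' \<omega>]
  define W0 where "W0 = blaschke a' (- a')"
  define v0 where "v0 = csqrt W0"
  have v0: "v0\<^sup>2 = W0" "v0 \<noteq> 0" using data(2) by (auto simp: v0_def W0_def)
  have \<kappa>0: "schur_value W0 0 (- a') (- \<gamma> / \<beta>0) \<noteq> 0"
    using \<gamma> \<open>\<beta>0 \<noteq> 0\<close> data(1,3) a' blaschke_eq_0_iff[of W0 "- a'"] by (simp add: schur_value_def W0_def)
  \<comment> \<open>This choice makes both Schur parameters of the limit data equal, so the limit problem is
    solved by a Moebius map and the interpolation problem stays solvable for small \<open>\<epsilon>\<close>.\<close>
  define C0 where "C0 = 1 / (2 * W0 * schur_value W0 0 (- a') (- \<gamma> / \<beta>0))"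
  define u where "u = (\<lambda>\<epsilon>. C0 * \<epsilon>)"
  define X where "X = (\<lambda>\<epsilon>. blaschke (- (u \<epsilon>)\<^sup>2) (- a'))"
  define c where "c = (\<lambda>\<epsilon>. a' / blaschke (X \<epsilon>) ((u \<epsilon>)\<^sup>2))"
  define W where "W = (\<lambda>\<epsilon>. blaschke (- X \<epsilon>) (- a' / c \<epsilon>))"
  define \<beta> where "\<beta> = (\<lambda>\<epsilon>. \<beta>0 * csqrt (X \<epsilon> / \<beta>0\<^sup>2))"
  define v where "v = (\<lambda>\<epsilon>. v0 * csqrt (W \<epsilon> / v0\<^sup>2))"
  define q where "q = (\<lambda>\<epsilon>::complex. 1 - norm \<epsilon> / 2)"
  let ?F = "at (0::complex)"
  have Lu: "(u \<longlongrightarrow> 0) ?F" unfolding u_def by (auto intro!: tendsto_eq_intros)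
  note LXW = tendsto_competitor_nodes[OF a' Lu X_def c_def W_def, folded W0_def]
  have L\<beta>: "(\<beta> \<longlongrightarrow> \<beta>0) ?F"
    unfolding \<beta>_def by (rule tendsto_sqrt_branch) (use LXW \<beta>0 \<open>\<beta>0 \<noteq> 0\<close> in auto)
  have Lv: "(v \<longlongrightarrow> v0) ?F"
    unfolding v_def by (rule tendsto_sqrt_branch) (use LXW v0 in auto)
  have Lq: "(q \<longlongrightarrow> 1) ?F" unfolding q_def by (auto intro!: tendsto_eq_intros)
  have "\<forall>\<^sub>F \<epsilon> in ?F. \<exists>K. K holomorphic_on ball 0 1 \<and> K ` ball 0 1 \<subseteq> ball 0 1 \<and>
          K (W \<epsilon>) = - \<epsilon> / (2 * v \<epsilon> * q \<epsilon>) \<and> K (X \<epsilon>) = (\<epsilon> / 2 - \<gamma>) / (\<beta> \<epsilon> * q \<epsilon>) \<and>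
          K ((u \<epsilon>)\<^sup>2) = - 1 / (2 * C0 * q \<epsilon>)"
  proof (rule eventually_three_point_interpolation[OF LXW(2,1)])
    show "((\<lambda>\<epsilon>. (u \<epsilon>)\<^sup>2) \<longlongrightarrow> 0) ?F" using tendsto_power[OF Lu, of 2] by simp
    show "((\<lambda>\<epsilon>. - \<epsilon> / (2 * v \<epsilon> * q \<epsilon>)) \<longlongrightarrow> 0) ?F"
      using v0 by (auto intro!: tendsto_eq_intros Lq Lv)
    show "((\<lambda>\<epsilon>. (\<epsilon> / 2 - \<gamma>) / (\<beta> \<epsilon> * q \<epsilon>)) \<longlongrightarrow> - \<gamma> / \<beta>0) ?F"
      using \<open>\<beta>0 \<noteq> 0\<close> by (auto intro!: tendsto_eq_intros Lq L\<beta>)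
    show "((\<lambda>\<epsilon>. - 1 / (2 * C0 * q \<epsilon>)) \<longlongrightarrow> - W0 * schur_value W0 0 (- a') (- \<gamma> / \<beta>0)) ?F"
      using data(2) \<kappa>0 by (auto intro!: tendsto_eq_intros Lq simp: C0_def W0_def)
  qed (use data a' \<omega> norm_mult_less_1[OF data(1) less_imp_le[OF data(4)]] in \<open>auto simp: W0_def\<close>)
  moreover have "\<forall>\<^sub>F \<epsilon> in ?F. \<epsilon> \<noteq> 0" by (simp add: eventually_at_filter)
  moreover have "\<forall>\<^sub>F \<epsilon> in ?F. norm (u \<epsilon>) < 1" using eventually_norm_less[OF Lu] by simp
  moreover have "\<forall>\<^sub>F \<epsilon> in ?F. \<beta> \<epsilon> \<noteq> 0" using tendsto_imp_eventually_ne[OF L\<beta> \<open>\<beta>0 \<noteq> 0\<close>] .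
  moreover have "\<forall>\<^sub>F \<epsilon> in ?F. v \<epsilon> \<noteq> 0" using tendsto_imp_eventually_ne[OF Lv v0(2)] .
  moreover have "\<forall>\<^sub>F \<epsilon> in ?F. norm \<epsilon> < 2" by (rule eventually_norm_less[OF tendsto_ident_at]) simp
  ultimately show ?thesis
  proof eventually_elim
    case (elim \<epsilon>)
    then obtain K where K: "K holomorphic_on ball 0 1" "K ` ball 0 1 \<subseteq> ball 0 1"
      "K (W \<epsilon>) = - \<epsilon> / (2 * v \<epsilon> * q \<epsilon>)" "K (X \<epsilon>) = (\<epsilon> / 2 - \<gamma>) / (\<beta> \<epsilon> * q \<epsilon>)"
      "K ((u \<epsilon>)\<^sup>2) = - 1 / (2 * C0 * q \<epsilon>)" by blast
    have u: "u \<epsilon> \<noteq> 0" using elim data(2) \<kappa>0 by (simp add: u_def C0_def W0_def)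
    show ?case
    proof (rule four_pole_competitor[OF a' r u elim(3)])
      show "(\<beta> \<epsilon>)\<^sup>2 = X \<epsilon>" "(v \<epsilon>)\<^sup>2 = W \<epsilon>"
        using square_of_sqrt_branch \<open>\<beta>0 \<noteq> 0\<close> v0(2) by (simp_all add: \<beta>_def v_def)
      show "K ((u \<epsilon>)\<^sup>2) = - \<epsilon> / (2 * u \<epsilon> * q \<epsilon>)" using K(5) elim by (simp add: u_def)
      show "X \<epsilon> = blaschke (- (u \<epsilon>)\<^sup>2) (- a')" by (simp add: X_def)
      show "c \<epsilon> = a' / blaschke (X \<epsilon>) ((u \<epsilon>)\<^sup>2)" by (simp add: c_def)
      show "W \<epsilon> = blaschke (- X \<epsilon>) (- a' / c \<epsilon>)" by (simp add: W_def)
    qed (use elim(4-6) K(1-4) in \<open>auto simp: q_def\<close>)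
  qed
qed

lemma Limsup_coman_lempert_le:
  fixes a \<gamma> :: complex and r :: real
  assumes a: "a \<noteq> 0" "norm a < r" "r < 1" and \<gamma>: "\<gamma> \<noteq> 0" "norm \<gamma> \<le> norm a powr (3/2)"
  shows "Limsup (at 0) (\<lambda>\<epsilon>. coman_lempert [(a, 0), (- a, 0), (- a, \<epsilon>), (a, \<epsilon>)] (0, \<gamma>))
           \<le> ereal (2 * ln (norm a / r))"
proof -
  have r0: "0 < r" using a by (meson norm_ge_zero le_less_trans)
  define a' where "a' = a / of_real r"
  have a': "a' \<noteq> 0" "norm a' < 1" "norm a < norm a'" "a = r * a'"
    using r0 a by (auto simp: a'_def norm_divide field_simps)
  define \<beta>0 where "\<beta>0 = csqrt (- a')"
  have "norm a powr (3/2) = norm a powr 1 * norm a powr (1/2)"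
    by (simp only: powr_add[symmetric]) simp
  then have "norm \<gamma> \<le> norm a * sqrt (norm a)" using \<gamma>(2) by (simp add: powr_half_sqrt)
  also have "\<dots> < norm a' * sqrt (norm a')" using a' a by (intro mult_strict_mono) auto
  finally have "norm (- \<gamma> / \<beta>0) < norm a'" using a' by (simp add: \<beta>0_def norm_divide field_simps)
  then have "\<forall>\<^sub>F \<epsilon> in at 0. coman_lempert [(a, 0), (- a, 0), (- a, \<epsilon>), (a, \<epsilon>)] (0, \<gamma>)
      \<le> ereal (2 * ln (norm a'))"
    using coman_lempert_eventually_le[OF a'(1,2) r0 a(3) _ \<gamma>(1), of \<beta>0] a'(4) by (simp add: \<beta>0_def)
  then show ?thesis using r0 by (simp add: Limsup_bounded a'_def norm_divide)
qed

lemma radius_with_gap: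
  fixes C \<kappa> :: real
  assumes C: "0 < C" "C < 1" and \<kappa>: "1 < \<kappa>"
  obtains r where "C < r" "r < 1" "2 * ln (C / r) < ln (C\<^sup>2 * \<kappa>)"
proof
  define s where "s = 1 / sqrt \<kappa>"
  define r where "r = (max C s + 1) / 2"
  have s: "0 < s" "s < 1" using \<kappa> by (auto simp: s_def)
  show r: "C < r" "r < 1" using C s by (auto simp: r_def)
  have "s < r" using s by (auto simp: r_def)
  then have "1 < r * sqrt \<kappa>" using \<kappa> by (simp add: s_def field_simps)
  then have "1 < (r * sqrt \<kappa>)\<^sup>2" by (smt (verit) one_less_power zero_less_numeral)
  then have "(C / r)\<^sup>2 < C\<^sup>2 * \<kappa>" using C \<kappa> r by (simp add: power_mult_distrib field_simps)
  moreover have "2 * ln (C / r) = ln ((C / r)\<^sup>2)" using C r by (simp add: ln_realpow)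
  ultimately show "2 * ln (C / r) < ln (C\<^sup>2 * \<kappa>)" using C r \<kappa> by simp
qed

theorem mainTheorem18:
  fixes a b \<gamma> :: complex
  assumes "a \<in> ball 0 1"
    and "b = - a"
    and "(cmod a)\<^sup>2 < cmod \<gamma>"
    and "cmod \<gamma> \<le> cmod a powr (3/2)"
  shows "Limsup (at (0::complex))
           (\<lambda>\<epsilon>. coman_lempert [(a, 0), (b, 0), (b, \<epsilon>), (a, \<epsilon>)] (0, \<gamma>))
         < min (min (L_a0b0 a b (0, \<gamma>)) (L_aVb0 a b (0, \<gamma>)))
               (min (L_a0bV a b (0, \<gamma>)) (L_aVbV a b (0, \<gamma>)))"
proof -
  have a: "a \<noteq> 0" "norm a < 1" and \<gamma>: "\<gamma> \<noteq> 0" using assms(1,3,4) by auto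
  obtain \<kappa> where \<kappa>: "1 < \<kappa>" and low: "ereal (ln ((norm a)\<^sup>2 * \<kappa>))
      \<le> min (min (L_a0b0 a b (0, \<gamma>)) (L_aVb0 a b (0, \<gamma>))) (min (L_a0bV a b (0, \<gamma>)) (L_aVbV a b (0, \<gamma>)))"
    using lempert_functions_gap[OF a assms(2,3)] by blast
  obtain r where r: "norm a < r" "r < 1" and gap: "2 * ln (norm a / r) < ln ((norm a)\<^sup>2 * \<kappa>)"
    using radius_with_gap[OF _ a(2) \<kappa>] a(1) by auto
  have "Limsup (at 0) (\<lambda>\<epsilon>. coman_lempert [(a, 0), (b, 0), (b, \<epsilon>), (a, \<epsilon>)] (0, \<gamma>))
      \<le> ereal (2 * ln (norm a / r))"
    using Limsup_coman_lempert_le[OF a(1) r \<gamma> assms(4)] assms(2) by simp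
  also have "\<dots> < ereal (ln ((norm a)\<^sup>2 * \<kappa>))" using gap by simp
  finally show ?thesis using low by (rule order.strict_trans2)
qed

end
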